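(* Assume $\mathbb{E}[W_0]<\infty$ and that $\mathbb{E}[W^2]$, $\mathbb{E}[(W\Delta')^2]$, $\mathbb{E}[W(\Delta')^2]$, $\mathbb{E}[(\Delta')^2]$ are finite. With $Y_{n,k}$ and $X_{n,k}$ as defined in the context, \[ \frac{\sum_{k=1}^{n-1}(Y_{n,k}-X_{n,k})}{\sqrt{\ln n}}\xrightarrow{p}0\quad\text{as } n\to\infty.\]
   Context: Blocks $\mathbf{B}_n=(B_n,D'_n,H'_n,P'_n,W_n)$: for $n\ge1$ i.i.d. hooked complete separable metric probability spaces $(B_n,D'_n,H'_n,P'_n)$ (hook $H'_n\in B_n$, $P'_n$ a Borel probability measure) with weights $W_n\ge0$, $\mathbb{E}[W_n]>0$; $\mathbf{B}_0$ independent of them, possibly differently distributed, with $W_0>0$. Let $S_k=\sum_{i=0}^kW_i$, so $\mathbb{E}[S_k]=k\mathbb{E}[W]+\mathbb{E}[W_0]$. $(W,\Delta')$ is a generic copy of $(W_n,\Delta'_n)$, $n\ge1$, where $\Delta'_n=D'_n(H'_n,U)$ with $U$ chosen in $B_n$ according to $P'_n$ given $\mathbf{B}_n$. Fix $n$. Conditionally on the blocks, let $J_{n,k}\sim\mathrm{Be}(W_k/S_k)$ and $\Delta'_{n,k}$ (distributed as $D'_k(H'_k,U_k)$, $U_k\sim P'_k$) be all independent, $0\le k\le n-1$, and $Y_{n,k}=J_{n,k}\Delta'_{n,k}$. For $1\le k\le n-1$ define $I_{n,k}$ as follows, using additional random variables $H_{n,k}$ that are, given the blocks, independent of each other and of all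 $J_{n,\cdot},\Delta'_{n,\cdot}$: if $W_k>\mathbb{E}[S_k]$, $I_{n,k}=0$; if $W_k\le\mathbb{E}[S_k]$ and $S_k\le\mathbb{E}[S_k]$, let $H_{n,k}\sim\mathrm{Be}(S_k/\mathbb{E}[S_k])$ and $I_{n,k}=H_{n,k}J_{n,k}$; if $W_k\le\mathbb{E}[S_k]<S_k$, let $H_{n,k}\sim\mathrm{Be}\big(\frac{W_k(S_k-\mathbb{E}[S_k])}{\mathbb{E}[S_k](S_k-W_k)}\big)$ and $I_{n,k}=\max(J_{n,k},H_{n,k})$. Set $X_{n,k}=I_{n,k}\Delta'_{n,k}$. *)

theory Defs
  imports "HOL-Probability.Probability"
begin

definition bern :: "real \<Rightarrow> real measure" where
  "bern p = distr (measure_pmf (bernoulli_pmf p)) borel (\<lambda>b. if b then 1 else 0)"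

text \<open>Success probability of the auxiliary variable H_{n,k}, given e = E[S_k], w = W_k, s = S_k.
  In the case w > e no H is needed; the value 0 is an unused dummy.\<close>
definition Hpar :: "real \<Rightarrow> real \<Rightarrow> real \<Rightarrow> real" where
  "Hpar e w s = (if w > e then 0 else if s \<le> e then s / e else (w * (s - e)) / (e * (s - w)))"

text \<open>The indicator I_{n,k} as a function of e = E[S_k], w = W_k, s = S_k, j = J_{n,k}, h = H_{n,k}.\<close>
definition Ifun :: "real \<Rightarrow> real \<Rightarrow> real \<Rightarrow> real \<Rightarrow> real \<Rightarrow> real" where
  "Ifun e w s j h = (if w > e then 0 else if s \<le> e then h * j else max j h)"

text \<open>Conditional law, given the block configuration b, of the triple (J_{n,k}, Delta'_{n,k}, H_{n,k}).
  w gives the weight of a block, kappa the law of D'(H',U) (U ~ P') given the block,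
  e = E[S_k].\<close>
definition triple_law :: "('b \<Rightarrow> real) \<Rightarrow> ('b \<Rightarrow> real measure) \<Rightarrow> real \<Rightarrow> (nat \<Rightarrow> 'b) \<Rightarrow> nat
    \<Rightarrow> (real \<times> real \<times> real) measure" where
  "triple_law w \<kappa> e b k =
     (let s = (\<Sum>i\<le>k. w (b i)) in
      bern (w (b k) / s) \<Otimes>\<^sub>M (\<kappa> (b k) \<Otimes>\<^sub>M bern (Hpar e (w (b k)) s)))"

end

theory Submission
  imports Defs
begin

(* Given the blocks, Y_{n,k} and X_{n,k} differ only where J_{n,k} and I_{n,k} differ, and the
   construction of H_{n,k} makes this happen with conditional probability
   W_k |S_k - E S_k| / (S_k E S_k) when W_k <= E S_k (and W_k / S_k otherwise).  Hence
   E|Y_{n,k} - X_{n,k}| is this probability times the conditional mean of |Delta'_k|.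
   Comparing S_k with E S_k through the deviation of W_1 + ... + W_{k-1} from its mean
   (second moments), treating the event that this sum falls below E S_k / 2 by an exponential
   moment bound, and using that B_k is independent of B_0, ..., B_{k-1}, gives
   E|Y_{n,k} - X_{n,k}| = O(k^(-3/2)) uniformly in n.  So the sum over k is bounded in L^1,
   and Markov's inequality yields convergence in probability to 0 after division by any
   sequence tending to infinity, in particular by sqrt (ln n). *)

lemma two_abs_le: "0 < c \<Longrightarrow> 2 * \<bar>x\<bar> \<le> x\<^sup>2 / c + (c :: real)"
  using sum_squares_ge_zero[of "\<bar>x\<bar> - c" 0]
  by (simp add: field_simps power2_eq_square)

lemma power_mult_abs_le:
  fixes a d :: real
  assumes "0 \<le> a" "j \<le> 2"
  shows "a ^ j * \<bar>d\<bar> \<le> 1 + a\<^sup>2 + d\<^sup>2 + (a * d)\<^sup>2"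
proof -
  have d: "\<bar>d\<bar> \<le> 1 + d\<^sup>2"
    using two_abs_le[of 1 d] by (simp add: power2_eq_square)
  have "2 * (a * \<bar>d\<bar>) \<le> a\<^sup>2 + d\<^sup>2"
    using sum_squares_ge_zero[of "a - \<bar>d\<bar>" 0] by (simp add: power2_eq_square algebra_simps)
  then have ad: "a * \<bar>d\<bar> \<le> a\<^sup>2 + d\<^sup>2"
    using mult_nonneg_nonneg[OF assms(1) abs_ge_zero[of d]] by linarith
  consider "j = 0" | "j = 1" | "j = 2"
    using assms(2) by linarith
  then show ?thesis
  proof cases
    case 1
    then show ?thesis
      using d zero_le_power2[of a] zero_le_power2[of "a * d"] by (simp only: power_0 mult_1)
  next
    case 2
    then show ?thesis
      using ad zero_le_power2[of "a * d"] by (simp only: power_one_right)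
  next
    case 3
    have "a\<^sup>2 * \<bar>d\<bar> \<le> a\<^sup>2 + a\<^sup>2 * d\<^sup>2"
      using mult_left_mono[OF d, of "a\<^sup>2"] by (simp add: distrib_left)
    moreover have "a ^ j * \<bar>d\<bar> = a\<^sup>2 * \<bar>d\<bar>" "(a * d)\<^sup>2 = a\<^sup>2 * d\<^sup>2"
      using 3 by (simp_all add: power_mult_distrib)
    ultimately show ?thesis
      using zero_le_power2[of d] by linarith
  qed
qed

lemma exp_minus_le_quadratic:
  fixes y :: real
  assumes "0 \<le> y"
  shows "exp (- y) \<le> 1 - y + y\<^sup>2 / 2"
proof -
  define f where "f y = 1 - y + y\<^sup>2 / 2 - exp (- y)" for y :: real
  have "f 0 \<le> f y"
  proof (rule DERIV_nonneg_imp_nondecreasing[OF assms])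
    fix x :: real
    assume "0 \<le> x" "x \<le> y"
    have "DERIV f x :> (- 1 + x + exp (- x))"
      unfolding f_def by (auto intro!: derivative_eq_intros simp: power2_eq_square)
    moreover have "0 \<le> - 1 + x + exp (- x)"
      using exp_ge_add_one_self[of "- x"] by linarith
    ultimately show "\<exists>d. DERIV f x :> d \<and> d \<ge> 0"
      by blast
  qed
  then show ?thesis
    by (simp add: f_def)
qed

lemma one_div_mult_sqrt_eq_powr:
  fixes e :: real
  assumes "0 < e"
  shows "1 / (e * sqrt e) = e powr (-3/2)"
proof -
  have "e powr (3/2) = e powr (1 + 1/2)"
    by simp
  also have "\<dots> = e powr 1 * e powr (1/2)"
    by (rule powr_add)
  also have "\<dots> = e * sqrt e"
    using assms by (simp add: powr_half_sqrt)
  finally show ?thesis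
    by (simp add: powr_minus_divide)
qed

lemma sum_atMost_split_first_last:
  fixes f :: "nat \<Rightarrow> 'a :: comm_monoid_add"
  assumes "1 \<le> k"
  shows "(\<Sum>i\<le>k. f i) = f k + f 0 + (\<Sum>i\<in>{1..<k}. f i)"
proof -
  have "{..k} = insert k (insert 0 {1..<k})"
    using assms by auto
  then show ?thesis
    using assms by (simp add: add.assoc)
qed

lemma sets_bern [simp, measurable_cong]: "sets (bern p) = sets borel"
  by (simp add: bern_def)

lemma space_bern [simp]: "space (bern p) = UNIV"
  by (simp add: bern_def)

lemma prob_space_bern: "prob_space (bern p)"
  unfolding bern_def by (intro prob_space.prob_space_distr) (auto simp: prob_space_measure_pmf)

lemma nn_integral_bern:
  assumes "0 \<le> p" "p \<le> 1" "f \<in> borel_measurable borel"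
  shows "(\<integral>\<^sup>+x. f x \<partial>bern p) = f 1 * ennreal p + f 0 * ennreal (1 - p)"
  using assms unfolding bern_def by (subst nn_integral_distr) auto

lemma emeasure_bern:
  assumes "0 \<le> p" "p \<le> 1" "A \<in> sets borel"
  shows "emeasure (bern p) A = indicator A 1 * ennreal p + indicator A 0 * ennreal (1 - p)"
  using assms nn_integral_bern[of p "indicator A"] by (simp add: nn_integral_indicator)

lemma measurable_bern:
  assumes [measurable]: "p \<in> borel_measurable A"
    and p01: "\<And>x. x \<in> space A \<Longrightarrow> 0 \<le> p x \<and> p x \<le> 1"
  shows "(\<lambda>x. bern (p x)) \<in> measurable A (prob_algebra borel)"
proof (rule measurable_prob_algebraI)
  show "(\<lambda>x. bern (p x)) \<in> measurable A (subprob_algebra borel)"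
  proof (rule measurable_subprob_algebra)
    fix S :: "real set" assume S: "S \<in> sets borel"
    have "(\<lambda>x. indicator S 1 * ennreal (p x) + indicator S 0 * ennreal (1 - p x)) \<in> borel_measurable A"
      by measurable
    then show "(\<lambda>x. emeasure (bern (p x)) S) \<in> borel_measurable A"
      by (rule measurable_cong[THEN iffD1, rotated]) (use p01 S in \<open>simp add: emeasure_bern\<close>)
  qed (auto intro: prob_space_imp_subprob_space prob_space_bern)
qed (rule prob_space_bern)

lemma measurable_PiM_prob_algebra:
  fixes K :: "'x \<Rightarrow> 'i \<Rightarrow> 'c measure"
  assumes "finite I" and K: "\<And>i. i \<in> I \<Longrightarrow> (\<lambda>x. K x i) \<in> measurable A (prob_algebra X)"
  shows "(\<lambda>x. PiM I (K x)) \<in> measurable A (prob_algebra (PiM I (\<lambda>_. X)))"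
  using assms
proof (induction I rule: finite_induct)
  case empty
  have "prob_space (PiM {} (\<lambda>_. X))" by (rule prob_space_PiM) auto
  then show ?case
    by (intro measurable_prob_algebraI measurable_const)
      (auto simp: PiM_empty space_subprob_algebra prob_space_imp_subprob_space)
next
  case (insert i I)
  have IH[measurable]: "(\<lambda>x. PiM I (K x)) \<in> measurable A (subprob_algebra (PiM I (\<lambda>_. X)))"
    using insert by (auto intro: measurable_prob_algebraD)
  have Ki[measurable]: "(\<lambda>x. K x i) \<in> measurable A (subprob_algebra X)"
    using insert by (auto intro: measurable_prob_algebraD)
  have K_prob: "prob_space (K x j)" and K_sets: "sets (K x j) = sets X"
    if "x \<in> space A" "j \<in> insert i I" for x j
    using insert.prems[of j] that by (auto dest!: measurable_space simp: space_prob_algebra)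
  have eq: "PiM (insert i I) (K x)
      = distr (K x i \<Otimes>\<^sub>M PiM I (K x)) (PiM (insert i I) (\<lambda>_. X)) (\<lambda>(y, Y). Y(i := y))"
    if x: "x \<in> space A" for x
  proof -
    have "PiM (insert i I) (K x)
        = distr (K x i \<Otimes>\<^sub>M PiM I (K x)) (PiM (insert i I) (K x)) (\<lambda>(y, Y). Y(i := y))"
      by (rule distr_pair_PiM_eq_PiM[symmetric]) (use K_prob x in auto)
    also have "\<dots> = distr (K x i \<Otimes>\<^sub>M PiM I (K x)) (PiM (insert i I) (\<lambda>_. X)) (\<lambda>(y, Y). Y(i := y))"
      by (rule distr_cong) (auto intro!: sets_PiM_cong K_sets x)
    finally show ?thesis .
  qed
  have "(\<lambda>x. distr (K x i \<Otimes>\<^sub>M PiM I (K x)) (PiM (insert i I) (\<lambda>_. X)) (\<lambda>(y, Y). Y(i := y)))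
      \<in> measurable A (subprob_algebra (PiM (insert i I) (\<lambda>_. X)))"
  proof (rule measurable_distr2[where M="X \<Otimes>\<^sub>M PiM I (\<lambda>_. X)"])
    show "(\<lambda>x. K x i \<Otimes>\<^sub>M PiM I (K x)) \<in> measurable A (subprob_algebra (X \<Otimes>\<^sub>M PiM I (\<lambda>_. X)))"
      by (rule measurable_pair_measure) measurable
    have "(\<lambda>z. (snd (snd z)) (i := fst (snd z)))
        \<in> measurable (A \<Otimes>\<^sub>M (X \<Otimes>\<^sub>M PiM I (\<lambda>_. X))) (PiM (insert i I) (\<lambda>_. X))"
      by (rule measurable_fun_upd[where J=I]) auto
    then show "(\<lambda>(x, yY). case yY of (y, Y) \<Rightarrow> Y(i := y))
        \<in> measurable (A \<Otimes>\<^sub>M (X \<Otimes>\<^sub>M PiM I (\<lambda>_. X))) (PiM (insert i I) (\<lambda>_. X))"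
      by (simp add: case_prod_beta')
  qed
  then have "(\<lambda>x. PiM (insert i I) (K x)) \<in> measurable A (subprob_algebra (PiM (insert i I) (\<lambda>_. X)))"
    by (rule measurable_cong[THEN iffD1, rotated]) (simp add: eq)
  then show ?case
    by (rule measurable_prob_algebraI[rotated]) (auto intro!: prob_space_PiM K_prob)
qed

lemma nn_integral_PiM_component:
  assumes "\<And>i. i \<in> I \<Longrightarrow> prob_space (M i)" "k \<in> I" and f: "f \<in> borel_measurable (M k)"
  shows "(\<integral>\<^sup>+t. f (t k) \<partial>PiM I M) = (\<integral>\<^sup>+y. f y \<partial>M k)"
proof -
  have "(\<integral>\<^sup>+t. f (t k) \<partial>PiM I M) = (\<integral>\<^sup>+y. f y \<partial>distr (PiM I M) (M k) (\<lambda>t. t k))"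
    using f assms(2) by (simp add: nn_integral_distr)
  then show ?thesis
    using assms by (simp add: distr_PiM_component)
qed

lemma (in prob_space) indep_var_nn_integral_mult:
  assumes ind: "indep_var S X T Y"
    and f: "f \<in> borel_measurable S" and g: "g \<in> borel_measurable T"
  shows "(\<integral>\<^sup>+x. f (X x) * g (Y x) \<partial>M) = (\<integral>\<^sup>+x. f (X x) \<partial>M) * (\<integral>\<^sup>+x. g (Y x) \<partial>M)"
proof -
  have X: "X \<in> measurable M S" and Y: "Y \<in> measurable M T"
    using indep_var_rv1[OF ind] indep_var_rv2[OF ind] by auto
  interpret SX: prob_space "distr M S X" by (rule prob_space_distr[OF X])
  interpret TY: prob_space "distr M T Y" by (rule prob_space_distr[OF Y])
  interpret P: pair_prob_space "distr M S X" "distr M T Y" ..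
  have eq: "distr M S X \<Otimes>\<^sub>M distr M T Y = distr M (S \<Otimes>\<^sub>M T) (\<lambda>x. (X x, Y x))"
    using ind by (simp add: indep_var_distribution_eq)
  have fg: "(\<lambda>z. f (fst z) * g (snd z)) \<in> borel_measurable (S \<Otimes>\<^sub>M T)"
    using f g by measurable
  have "(\<integral>\<^sup>+x. f (X x) * g (Y x) \<partial>M)
      = (\<integral>\<^sup>+z. f (fst z) * g (snd z) \<partial>distr M (S \<Otimes>\<^sub>M T) (\<lambda>x. (X x, Y x)))"
    using X Y fg by (subst nn_integral_distr) auto
  also have "\<dots> = (\<integral>\<^sup>+z. f (fst z) * g (snd z) \<partial>(distr M S X \<Otimes>\<^sub>M distr M T Y))"
    by (simp add: eq)
  also have "\<dots> = (\<integral>\<^sup>+a. \<integral>\<^sup>+b. f a * g b \<partial>distr M T Y \<partial>distr M S X)"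
    using TY.nn_integral_fst[of "\<lambda>z. f (fst z) * g (snd z)"] fg by simp
  also have "\<dots> = (\<integral>\<^sup>+a. f a * (\<integral>\<^sup>+b. g b \<partial>distr M T Y) \<partial>distr M S X)"
    using g by (intro nn_integral_cong nn_integral_cmult) simp
  also have "\<dots> = (\<integral>\<^sup>+a. f a \<partial>distr M S X) * (\<integral>\<^sup>+b. g b \<partial>distr M T Y)"
    using f by (intro nn_integral_multc) simp
  also have "\<dots> = (\<integral>\<^sup>+x. f (X x) \<partial>M) * (\<integral>\<^sup>+x. g (Y x) \<partial>M)"
    using X Y f g by (simp add: nn_integral_distr)
  finally show ?thesis .
qed

section \<open>The conditional probability that the two indicators differ\<close>

lemma measurable_Ifun [measurable]:
  assumes [measurable]: "e \<in> borel_measurable M" "w \<in> borel_measurable M" "s \<in> borel_measurable M"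
    "j \<in> borel_measurable M" "h \<in> borel_measurable M"
  shows "(\<lambda>x. Ifun (e x) (w x) (s x) (j x) (h x)) \<in> borel_measurable M"
  unfolding Ifun_def by measurable

lemma Hpar_bounds:
  assumes "0 < e" "0 \<le> w" "w \<le> s"
  shows "0 \<le> Hpar e w s" "Hpar e w s \<le> 1"
proof -
  have "w * (s - e) \<le> e * (s - w)" if "w \<le> e" "e < s"
    using that assms by (simp add: algebra_simps mult_right_mono)
  then show "0 \<le> Hpar e w s" "Hpar e w s \<le> 1"
    using assms by (auto simp: Hpar_def divide_le_eq_1 intro!: divide_nonneg_pos)
qed

text \<open>The probability that \<open>J \<noteq> Ifun e w s J H\<close> for independent \<open>J \<sim> Be p\<close>, \<open>H \<sim> Be q\<close>.\<close>

definition mismatch :: "real \<Rightarrow> real \<Rightarrow> real \<Rightarrow> real \<Rightarrow> real \<Rightarrow> real" where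
  "mismatch e w s p q = p * (\<bar>1 - Ifun e w s 1 1\<bar> * q + \<bar>1 - Ifun e w s 1 0\<bar> * (1 - q))
     + (1 - p) * (\<bar>Ifun e w s 0 1\<bar> * q + \<bar>Ifun e w s 0 0\<bar> * (1 - q))"

lemma nn_integral_bern_abs_Ifun:
  assumes "0 \<le> q" "q \<le> 1"
  shows "(\<integral>\<^sup>+h. ennreal \<bar>j * d - Ifun e w s j h * d\<bar> \<partial>bern q)
    = ennreal \<bar>d\<bar> * ennreal (\<bar>j - Ifun e w s j 1\<bar> * q + \<bar>j - Ifun e w s j 0\<bar> * (1 - q))"
proof -
  have "(\<integral>\<^sup>+h. ennreal \<bar>j * d - Ifun e w s j h * d\<bar> \<partial>bern q)
     = ennreal (\<bar>j * d - Ifun e w s j 1 * d\<bar> * q + \<bar>j * d - Ifun e w s j 0 * d\<bar> * (1 - q))"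
    using assms by (subst nn_integral_bern) (auto simp: ennreal_mult'')
  also have "\<bar>j * d - Ifun e w s j 1 * d\<bar> * q + \<bar>j * d - Ifun e w s j 0 * d\<bar> * (1 - q)
      = \<bar>d\<bar> * (\<bar>j - Ifun e w s j 1\<bar> * q + \<bar>j - Ifun e w s j 0\<bar> * (1 - q))"
  proof -
    have "\<bar>j * d - Ifun e w s j h * d\<bar> = \<bar>d\<bar> * \<bar>j - Ifun e w s j h\<bar>" for h
      by (simp add: left_diff_distrib[symmetric] abs_mult)
    then show ?thesis
      by (simp add: algebra_simps)
  qed
  finally show ?thesis
    by (simp add: ennreal_mult')
qed

lemma nn_integral_mismatch:
  assumes K: "prob_space K" "sets K = sets borel"
    and p: "0 \<le> p" "p \<le> 1" and q: "0 \<le> q" "q \<le> 1"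
  shows "(\<integral>\<^sup>+z. ennreal \<bar>fst z * fst (snd z) - Ifun e w s (fst z) (snd (snd z)) * fst (snd z)\<bar>
            \<partial>(bern p \<Otimes>\<^sub>M (K \<Otimes>\<^sub>M bern q)))
         = ennreal (mismatch e w s p q) * (\<integral>\<^sup>+d. ennreal \<bar>d\<bar> \<partial>K)"
proof -
  interpret K: prob_space K by fact
  interpret Bp: prob_space "bern p" by (rule prob_space_bern)
  interpret Bq: prob_space "bern q" by (rule prob_space_bern)
  have [measurable_cong]: "sets K = sets borel" by fact
  define c where "c j = \<bar>j - Ifun e w s j 1\<bar> * q + \<bar>j - Ifun e w s j 0\<bar> * (1 - q)" for j
  have c_nonneg: "0 \<le> c j" for j
    using q by (simp add: c_def)
  have inner: "(\<integral>\<^sup>+h. ennreal \<bar>j * d - Ifun e w s j h * d\<bar> \<partial>bern q) = ennreal \<bar>d\<bar> * ennreal (c j)"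
    for j d
    unfolding c_def by (rule nn_integral_bern_abs_Ifun[OF q])
  have "(\<integral>\<^sup>+z. ennreal \<bar>fst z * fst (snd z) - Ifun e w s (fst z) (snd (snd z)) * fst (snd z)\<bar>
            \<partial>(bern p \<Otimes>\<^sub>M (K \<Otimes>\<^sub>M bern q)))
      = (\<integral>\<^sup>+j. \<integral>\<^sup>+y. ennreal \<bar>j * fst y - Ifun e w s j (snd y) * fst y\<bar>
            \<partial>(K \<Otimes>\<^sub>M bern q) \<partial>bern p)"
  proof -
    have "(\<lambda>z. ennreal \<bar>fst z * fst (snd z) - Ifun e w s (fst z) (snd (snd z)) * fst (snd z)\<bar>)
        \<in> borel_measurable (bern p \<Otimes>\<^sub>M (K \<Otimes>\<^sub>M bern q))"
      by measurable
    from sigma_finite_measure.nn_integral_fst[OF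
        prob_space_imp_sigma_finite[OF prob_space_pair[OF K(1) prob_space_bern]] this]
    show ?thesis
      by (simp add: case_prod_beta)
  qed
  also have "\<dots> = (\<integral>\<^sup>+j. \<integral>\<^sup>+d. \<integral>\<^sup>+h. ennreal \<bar>j * d - Ifun e w s j h * d\<bar> \<partial>bern q \<partial>K \<partial>bern p)"
  proof (intro nn_integral_cong)
    fix j
    have "(\<lambda>y. ennreal \<bar>j * fst y - Ifun e w s j (snd y) * fst y\<bar>) \<in> borel_measurable (K \<Otimes>\<^sub>M bern q)"
      by measurable
    from sigma_finite_measure.nn_integral_fst[OF prob_space_imp_sigma_finite[OF prob_space_bern] this]
    show "(\<integral>\<^sup>+y. ennreal \<bar>j * fst y - Ifun e w s j (snd y) * fst y\<bar> \<partial>(K \<Otimes>\<^sub>M bern q))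
       = (\<integral>\<^sup>+d. \<integral>\<^sup>+h. ennreal \<bar>j * d - Ifun e w s j h * d\<bar> \<partial>bern q \<partial>K)"
      by simp
  qed
  also have "\<dots> = (\<integral>\<^sup>+j. (\<integral>\<^sup>+d. ennreal \<bar>d\<bar> \<partial>K) * ennreal (c j) \<partial>bern p)"
    by (simp add: inner nn_integral_multc)
  also have "\<dots> = (\<integral>\<^sup>+d. ennreal \<bar>d\<bar> \<partial>K) * (ennreal (c 1) * ennreal p + ennreal (c 0) * ennreal (1 - p))"
    using p by (subst nn_integral_bern) (auto simp: c_def algebra_simps)
  also have "ennreal (c 1) * ennreal p + ennreal (c 0) * ennreal (1 - p) = ennreal (c 1 * p + c 0 * (1 - p))"
    using p c_nonneg by (simp add: ennreal_mult'')
  also have "c 1 * p + c 0 * (1 - p) = mismatch e w s p q"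
    by (simp add: c_def mismatch_def algebra_simps)
  finally show ?thesis
    by (simp add: mult.commute)
qed

text \<open>The choice of \<open>Hpar\<close> makes \<open>Ifun e w s J H\<close> a \<open>Be (w / e)\<close> variable as long as \<open>w \<le> e\<close>;
  the mismatch is then the total variation distance between \<open>Be (w / s)\<close> and \<open>Be (w / e)\<close>.\<close>

lemma mismatch_coupling:
  assumes "0 < e" "0 \<le> w" "w \<le> s" "0 < s"
  shows "mismatch e w s (w / s) (Hpar e w s) = (if e < w then w / s else w * \<bar>s - e\<bar> / (s * e))"
proof (cases "e < w")
  case False
  then show ?thesis
  proof (cases "s \<le> e")
    case True
    have "mismatch e w s (w / s) (Hpar e w s) = w / s * (1 - s / e)"
      using True False by (simp add: mismatch_def Ifun_def Hpar_def)
    also have "\<dots> = w * \<bar>s - e\<bar> / (s * e)"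
      using True assms by (simp add: field_simps)
    finally show ?thesis
      using False by simp
  next
    case s_gt: False
    have "mismatch e w s (w / s) (Hpar e w s) = (1 - w / s) * (w * (s - e) / (e * (s - w)))"
      using s_gt False by (simp add: mismatch_def Ifun_def Hpar_def)
    also have "\<dots> = w * \<bar>s - e\<bar> / (s * e)"
      using s_gt False assms by (simp add: field_simps)
    finally show ?thesis
      using False by simp
  qed
qed (simp add: mismatch_def Ifun_def Hpar_def)

text \<open>Here \<open>s = w + W0 + T\<close> and \<open>e = a + mu + mu0\<close>, where \<open>T\<close> (the sum of \<open>W_1, \<dots>, W_(k-1)\<close>) has
  mean \<open>a\<close>. Off the event \<open>T < e / 2\<close> the denominator \<open>s * e\<close> is at least \<open>e\<^sup>2 / 2\<close>, and
  \<open>2 \<bar>T - a\<bar>\<close> is split as \<open>(T - a)\<^sup>2 / sqrt e + sqrt e\<close>.\<close>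

lemma mismatch_coupling_le:
  fixes e w W0 T a mu mu0 :: real
  assumes e: "e = a + mu + mu0" "0 < e"
    and nonneg: "0 \<le> w" "0 < W0" "0 \<le> T" "0 \<le> mu" "0 \<le> mu0" "0 \<le> a"
  defines "s \<equiv> w + W0 + T"
  shows "mismatch e w s (w / s) (Hpar e w s) \<le>
     (3 * w\<^sup>2 + 2 * mu * w + 2 * w * (W0 + mu0) + w * ((T - a)\<^sup>2 / sqrt e + sqrt e)) / e\<^sup>2
     + (if T < e / 2 then 1 else 0)"
    (is "_ \<le> ?R / e\<^sup>2 + _")
proof -
  have s: "0 < s" "w \<le> s"
    using nonneg by (auto simp: s_def)
  have R_nonneg: "0 \<le> ?R / e\<^sup>2"
    using nonneg e by (intro divide_nonneg_nonneg add_nonneg_nonneg mult_nonneg_nonneg) auto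
  have ge: "mismatch e w s (w / s) (Hpar e w s) \<le> ?R / e\<^sup>2" if "e / 2 \<le> s" "w \<le> e"
  proof -
    have "mismatch e w s (w / s) (Hpar e w s) = w * \<bar>s - e\<bar> / (s * e)"
      using mismatch_coupling[OF e(2) nonneg(1) s(2,1)] that by simp
    also have "\<dots> \<le> w * \<bar>s - e\<bar> / (e / 2 * e)"
      using that e nonneg by (intro divide_left_mono mult_right_mono mult_nonneg_nonneg) auto
    also have "\<dots> = 2 * w * \<bar>s - e\<bar> / e\<^sup>2"
      by (simp add: power2_eq_square)
    also have "2 * w * \<bar>s - e\<bar> \<le> 2 * w * (\<bar>T - a\<bar> + W0 + mu0 + w + mu)"
      using nonneg unfolding s_def e(1) by (intro mult_left_mono) auto
    also have "\<dots> = w * (2 * \<bar>T - a\<bar>) + 2 * w * (W0 + mu0) + 2 * w\<^sup>2 + 2 * mu * w"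
      by (simp add: power2_eq_square algebra_simps)
    also have "\<dots> \<le> w * ((T - a)\<^sup>2 / sqrt e + sqrt e) + 2 * w * (W0 + mu0) + 2 * w\<^sup>2 + 2 * mu * w"
      using two_abs_le[of "sqrt e" "T - a"] e nonneg by (simp add: mult_left_mono)
    also have "\<dots> \<le> ?R"
      by simp
    finally show ?thesis
      using e by (simp add: divide_right_mono)
  qed
  show ?thesis
  proof (cases "e < w")
    case True
    have "mismatch e w s (w / s) (Hpar e w s) \<le> 1"
      using mismatch_coupling[OF e(2) nonneg(1) s(2,1)] True s by simp
    also have "1 \<le> w\<^sup>2 / e\<^sup>2"
      using True e by (simp add: power_mono)
    also have "\<dots> \<le> ?R / e\<^sup>2"
      using nonneg e by (intro divide_right_mono) auto
    finally show ?thesis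
      by simp
  next
    case False
    show ?thesis
    proof (cases "s < e / 2")
      case True
      have "mismatch e w s (w / s) (Hpar e w s) = (w / s) * (\<bar>s - e\<bar> / e)"
        using mismatch_coupling[OF e(2) nonneg(1) s(2,1)] False by simp
      also have "\<dots> \<le> 1 * 1"
        using s True e by (intro mult_mono) auto
      moreover have "T < e / 2"
        using True nonneg by (simp add: s_def)
      ultimately show ?thesis
        using R_nonneg by simp
    qed (use ge False R_nonneg in auto)
  qed
qed

section \<open>The block model\<close>

locale block_model = prob_space M for M :: "'a measure" +
  fixes N :: "'b measure"
    and B :: "nat \<Rightarrow> 'a \<Rightarrow> 'b"
    and w :: "'b \<Rightarrow> real"
    and \<kappa> :: "'b \<Rightarrow> real measure"
    and J D H :: "nat \<Rightarrow> nat \<Rightarrow> 'a \<Rightarrow> real"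
  assumes B_meas [measurable]: "\<And>k. B k \<in> measurable M N"
    and B_indep: "indep_vars (\<lambda>_. N) B UNIV"
    and B_ident: "\<And>k. k \<ge> 1 \<Longrightarrow> distr M N (B k) = distr M N (B 1)"
    and w_meas [measurable]: "w \<in> borel_measurable N"
    and w_nonneg: "\<And>b. b \<in> space N \<Longrightarrow> w b \<ge> 0"
    and W0_pos: "\<And>x. x \<in> space M \<Longrightarrow> w (B 0 x) > 0"
    and kappa_meas [measurable]: "\<kappa> \<in> measurable N (prob_algebra borel)"
    and EW_pos: "expectation (\<lambda>x. w (B 1 x)) > 0"
    and EW0_fin: "integrable M (\<lambda>x. w (B 0 x))"
    and mom_W2: "integrable (bind (distr M N (B 1)) (\<lambda>b. distr (\<kappa> b) (borel \<Otimes>\<^sub>M borel) (\<lambda>d. (w b, d))))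
                  (\<lambda>(a, d). a\<^sup>2)"
    and mom_WD2: "integrable (bind (distr M N (B 1)) (\<lambda>b. distr (\<kappa> b) (borel \<Otimes>\<^sub>M borel) (\<lambda>d. (w b, d))))
                  (\<lambda>(a, d). (a * d)\<^sup>2)"
    and mom_D2: "integrable (bind (distr M N (B 1)) (\<lambda>b. distr (\<kappa> b) (borel \<Otimes>\<^sub>M borel) (\<lambda>d. (w b, d))))
                  (\<lambda>(a, d). d\<^sup>2)"
    and J_meas [measurable]: "\<And>n k. J n k \<in> borel_measurable M"
    and D_meas [measurable]: "\<And>n k. D n k \<in> borel_measurable M"
    and H_meas [measurable]: "\<And>n k. H n k \<in> borel_measurable M"
    and joint: "\<And>n. distr M
        ((\<Pi>\<^sub>M i\<in>UNIV. N) \<Otimes>\<^sub>M (\<Pi>\<^sub>M k\<in>{0..<n}. borel \<Otimes>\<^sub>M (borel \<Otimes>\<^sub>M borel)))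
        (\<lambda>x. ((\<lambda>i. B i x), (\<lambda>k\<in>{0..<n}. (J n k x, D n k x, H n k x))))
      = bind (distr M (\<Pi>\<^sub>M i\<in>UNIV. N) (\<lambda>x i. B i x))
          (\<lambda>b. distr (\<Pi>\<^sub>M k\<in>{0..<n}. triple_law w \<kappa>
                         (real k * expectation (\<lambda>x. w (B 1 x))
                            + expectation (\<lambda>x. w (B 0 x))) b k)
                  ((\<Pi>\<^sub>M i\<in>UNIV. N) \<Otimes>\<^sub>M (\<Pi>\<^sub>M k\<in>{0..<n}. borel \<Otimes>\<^sub>M (borel \<Otimes>\<^sub>M borel)))
                  (\<lambda>t. (b, t)))"
begin

definition "mu = expectation (\<lambda>x. w (B 1 x))"
definition "mu0 = expectation (\<lambda>x. w (B 0 x))"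
definition "ES k = real k * mu + mu0"
definition "abs_mean b = (\<integral>\<^sup>+d. ennreal \<bar>d\<bar> \<partial>\<kappa> b)"
definition "Y_minus_X n k x =
  J n k x * D n k x - Ifun (ES k) (w (B k x)) (\<Sum>i\<le>k. w (B i x)) (J n k x) (H n k x) * D n k x"

lemma mu_pos: "0 < mu"
  using EW_pos by (simp add: mu_def)

lemma mu0_pos: "0 < mu0"
proof -
  have "0 \<le> mu0"
    unfolding mu0_def using W0_pos by (intro integral_nonneg_AE) (auto intro: less_imp_le)
  moreover have "mu0 \<noteq> 0"
  proof
    assume "mu0 = 0"
    then have "AE x in M. w (B 0 x) = 0"
      unfolding mu0_def using W0_pos EW0_fin
      by (subst integral_nonneg_eq_0_iff_AE[symmetric]) (auto intro: less_imp_le)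
    moreover have "AE x in M. w (B 0 x) \<noteq> 0"
      using W0_pos by (intro AE_I2) (metis less_irrefl)
    ultimately show False
      by (rule AE_contr)
  qed
  ultimately show ?thesis
    by simp
qed

lemma ES_pos: "0 < ES k"
  using mu_pos mu0_pos by (simp add: ES_def add_nonneg_pos)

lemma prob_space_kappa: "b \<in> space N \<Longrightarrow> prob_space (\<kappa> b)"
  and sets_kappa: "b \<in> space N \<Longrightarrow> sets (\<kappa> b) = sets borel"
  using measurable_space[OF kappa_meas] by (auto simp: space_prob_algebra)

lemma measurable_nn_integral_kappa:
  assumes [measurable]: "(\<lambda>(b, d). f b d) \<in> borel_measurable (N \<Otimes>\<^sub>M borel)"
  shows "(\<lambda>b. \<integral>\<^sup>+d. f b d \<partial>\<kappa> b) \<in> borel_measurable N"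
  by (rule nn_integral_measurable_subprob_algebra2[where N=borel])
    (auto intro: measurable_prob_algebraD[OF kappa_meas])

lemma abs_mean_measurable [measurable]: "abs_mean \<in> borel_measurable N"
  unfolding abs_mean_def by (rule measurable_nn_integral_kappa) measurable

lemma Y_minus_X_measurable [measurable]: "Y_minus_X n k \<in> borel_measurable M"
  unfolding Y_minus_X_def by measurable

abbreviation "triples \<equiv> (borel \<Otimes>\<^sub>M (borel \<Otimes>\<^sub>M borel) :: (real \<times> real \<times> real) measure)"
abbreviation "blocks \<equiv> (PiM UNIV (\<lambda>_::nat. N))"

definition "J_prob k b = w (b k) / (\<Sum>i\<le>k. w (b i))"
definition "H_prob k b = Hpar (ES k) (w (b k)) (\<Sum>i\<le>k. w (b i))"

lemma J_prob_measurable [measurable]: "J_prob k \<in> borel_measurable blocks"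
  unfolding J_prob_def by measurable

lemma H_prob_measurable [measurable]: "H_prob k \<in> borel_measurable blocks"
  unfolding H_prob_def Hpar_def by measurable

lemma weight_le_sum:
  assumes "b \<in> space blocks"
  shows "0 \<le> w (b k)" "w (b k) \<le> (\<Sum>i\<le>k. w (b i))"
  using assms by (auto intro!: member_le_sum w_nonneg simp: space_PiM PiE_iff)

lemma J_prob_bounds: "b \<in> space blocks \<Longrightarrow> 0 \<le> J_prob k b \<and> J_prob k b \<le> 1"
  using weight_le_sum[of b k] by (auto simp: J_prob_def divide_le_eq_1)

lemma H_prob_bounds:
  assumes "b \<in> space blocks"
  shows "0 \<le> H_prob k b \<and> H_prob k b \<le> 1"
  using Hpar_bounds[OF ES_pos weight_le_sum(1,2)[OF assms]] by (simp add: H_prob_def)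

lemma triple_law_eq:
  "triple_law w \<kappa> (ES k) b k = bern (J_prob k b) \<Otimes>\<^sub>M (\<kappa> (b k) \<Otimes>\<^sub>M bern (H_prob k b))"
  by (simp add: triple_law_def J_prob_def H_prob_def Let_def)

lemma triple_law_measurable:
  "(\<lambda>b. triple_law w \<kappa> (ES k) b k) \<in> measurable blocks (prob_algebra triples)"
proof -
  have "(\<lambda>b. bern (J_prob k b)) \<in> measurable blocks (prob_algebra borel)"
    "(\<lambda>b. bern (H_prob k b)) \<in> measurable blocks (prob_algebra borel)"
    by (auto intro!: measurable_bern simp: J_prob_bounds H_prob_bounds)
  moreover have "(\<lambda>b. \<kappa> (b k)) \<in> measurable blocks (prob_algebra borel)"
    by measurable
  ultimately have "(\<lambda>b. bern (J_prob k b) \<Otimes>\<^sub>M (\<kappa> (b k) \<Otimes>\<^sub>M bern (H_prob k b)))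
      \<in> measurable blocks (subprob_algebra triples)"
    by (intro measurable_pair_measure measurable_prob_algebraD)
  moreover have "prob_space (bern (J_prob k b) \<Otimes>\<^sub>M (\<kappa> (b k) \<Otimes>\<^sub>M bern (H_prob k b)))"
    if "b \<in> space blocks" for b
    using that by (intro prob_space_pair prob_space_bern prob_space_kappa) (auto simp: space_PiM)
  ultimately show ?thesis
    unfolding triple_law_eq by (intro measurable_prob_algebraI)
qed

lemma prob_space_triple_law: "b \<in> space blocks \<Longrightarrow> prob_space (triple_law w \<kappa> (ES k) b k)"
  and sets_triple_law: "b \<in> space blocks \<Longrightarrow> sets (triple_law w \<kappa> (ES k) b k) = sets triples"
  using measurable_space[OF triple_law_measurable] by (auto simp: space_prob_algebra)

lemma B_seq_measurable [measurable]: "(\<lambda>x i. B i x) \<in> measurable M blocks"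
  by (rule measurable_PiM_single') (auto intro: measurable_space)

lemma nn_integral_triple_component:
  assumes k: "k < n"
    and g [measurable]: "(\<lambda>(b, y). g b y) \<in> borel_measurable (blocks \<Otimes>\<^sub>M triples)"
  shows "(\<integral>\<^sup>+x. g (\<lambda>i. B i x) (J n k x, D n k x, H n k x) \<partial>M)
       = (\<integral>\<^sup>+x. \<integral>\<^sup>+y. g (\<lambda>i. B i x) y \<partial>triple_law w \<kappa> (ES k) (\<lambda>i. B i x) k \<partial>M)"
proof -
  let ?P = "PiM {0..<n} (\<lambda>_::nat. triples)"
  let ?X = "blocks \<Otimes>\<^sub>M ?P"
  let ?T = "\<lambda>b. PiM {0..<n} (\<lambda>k. triple_law w \<kappa> (ES k) b k)"
  define K where "K b = distr (?T b) ?X (\<lambda>t. (b, t))" for b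
  define G where "G z = g (fst z) (snd z k)" for z :: "(nat \<Rightarrow> 'b) \<times> (nat \<Rightarrow> real \<times> real \<times> real)"
  have kI: "k \<in> {0..<n}"
    using k by simp
  have "(\<lambda>z. snd z k) \<in> measurable ?X triples"
    using measurable_component_singleton[OF kI, of "\<lambda>_. triples"] by measurable
  then have G_meas [measurable]: "G \<in> borel_measurable ?X"
    unfolding G_def by measurable
  have T_meas: "?T \<in> measurable blocks (prob_algebra ?P)"
    by (rule measurable_PiM_prob_algebra) (auto intro: triple_law_measurable)
  have K_meas: "K \<in> measurable blocks (subprob_algebra ?X)"
    unfolding K_def by (rule measurable_distr2[where M="?P"]) (auto intro: measurable_prob_algebraD[OF T_meas])
  have joint': "distr M ?X (\<lambda>x. ((\<lambda>i. B i x), (\<lambda>k\<in>{0..<n}. (J n k x, D n k x, H n k x))))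
      = bind (distr M blocks (\<lambda>x i. B i x)) K"
    unfolding K_def ES_def mu_def mu0_def by (rule joint)
  have inner: "(\<integral>\<^sup>+z. G z \<partial>K b) = (\<integral>\<^sup>+y. g b y \<partial>triple_law w \<kappa> (ES k) b k)"
    if b: "b \<in> space blocks" for b
  proof -
    have sets_T: "sets (?T b) = sets ?P"
      using measurable_space[OF T_meas b] by (simp add: space_prob_algebra)
    have gb: "g b \<in> borel_measurable triples"
      using measurable_Pair2[OF g b] by simp
    have "(\<integral>\<^sup>+z. G z \<partial>K b) = (\<integral>\<^sup>+t. G (b, t) \<partial>?T b)"
      unfolding K_def
    proof (rule nn_integral_distr)
      show "(\<lambda>t. (b, t)) \<in> measurable (?T b) ?X"
        using measurable_Pair1'[OF b, of ?P] by (simp add: measurable_cong_sets[OF sets_T refl])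
    qed (simp add: measurable_cong_sets[OF sets_distr refl])
    also have "\<dots> = (\<integral>\<^sup>+t. g b (t k) \<partial>?T b)"
      by (simp add: G_def)
    also have "\<dots> = (\<integral>\<^sup>+y. g b y \<partial>triple_law w \<kappa> (ES k) b k)"
      using gb b kI by (intro nn_integral_PiM_component prob_space_triple_law)
        (auto simp: measurable_cong_sets[OF sets_triple_law[OF b] refl])
    finally show ?thesis .
  qed
  have "(\<integral>\<^sup>+x. g (\<lambda>i. B i x) (J n k x, D n k x, H n k x) \<partial>M)
      = (\<integral>\<^sup>+x. G ((\<lambda>i. B i x), (\<lambda>k\<in>{0..<n}. (J n k x, D n k x, H n k x))) \<partial>M)"
    using kI by (simp add: G_def)
  also have "\<dots>
      = (\<integral>\<^sup>+z. G z \<partial>distr M ?X (\<lambda>x. ((\<lambda>i. B i x), (\<lambda>k\<in>{0..<n}. (J n k x, D n k x, H n k x)))))"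
    by (subst nn_integral_distr) auto
  also have "\<dots> = (\<integral>\<^sup>+b. \<integral>\<^sup>+z. G z \<partial>K b \<partial>distr M blocks (\<lambda>x i. B i x))"
    unfolding joint' by (rule nn_integral_bind[OF G_meas]) (simp add: K_meas)
  also have "\<dots> = (\<integral>\<^sup>+b. \<integral>\<^sup>+y. g b y \<partial>triple_law w \<kappa> (ES k) b k \<partial>distr M blocks (\<lambda>x i. B i x))"
    by (intro nn_integral_cong) (simp add: inner)
  also have "\<dots> = (\<integral>\<^sup>+x. \<integral>\<^sup>+y. g (\<lambda>i. B i x) y \<partial>triple_law w \<kappa> (ES k) (\<lambda>i. B i x) k \<partial>M)"
  proof -
    have "(\<lambda>b. \<integral>\<^sup>+y. g b y \<partial>triple_law w \<kappa> (ES k) b k) \<in> borel_measurable blocks"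
      by (rule nn_integral_measurable_subprob_algebra2[where N=triples])
        (auto intro: measurable_prob_algebraD[OF triple_law_measurable])
    then show ?thesis
      by (subst nn_integral_distr) auto
  qed
  finally show ?thesis .
qed

lemma nn_integral_Y_minus_X:
  assumes "k < n"
  shows "(\<integral>\<^sup>+x. ennreal \<bar>Y_minus_X n k x\<bar> \<partial>M)
    = (\<integral>\<^sup>+x. ennreal (mismatch (ES k) (w (B k x)) (\<Sum>i\<le>k. w (B i x))
                   (J_prob k (\<lambda>i. B i x)) (H_prob k (\<lambda>i. B i x))) * abs_mean (B k x) \<partial>M)"
proof -
  define g where "g b y = ennreal \<bar>fst y * fst (snd y)
      - Ifun (ES k) (w (b k)) (\<Sum>i\<le>k. w (b i)) (fst y) (snd (snd y)) * fst (snd y)\<bar>"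
    for b :: "nat \<Rightarrow> 'b" and y :: "real \<times> real \<times> real"
  have "(\<lambda>(b, y). g b y) \<in> borel_measurable (blocks \<Otimes>\<^sub>M triples)"
    unfolding g_def by measurable
  from nn_integral_triple_component[OF assms this]
  have "(\<integral>\<^sup>+x. ennreal \<bar>Y_minus_X n k x\<bar> \<partial>M)
      = (\<integral>\<^sup>+x. \<integral>\<^sup>+y. g (\<lambda>i. B i x) y \<partial>triple_law w \<kappa> (ES k) (\<lambda>i. B i x) k \<partial>M)"
    by (simp add: g_def Y_minus_X_def)
  also have "\<dots> = (\<integral>\<^sup>+x. ennreal (mismatch (ES k) (w (B k x)) (\<Sum>i\<le>k. w (B i x))
                   (J_prob k (\<lambda>i. B i x)) (H_prob k (\<lambda>i. B i x))) * abs_mean (B k x) \<partial>M)"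
  proof (intro nn_integral_cong)
    fix x assume "x \<in> space M"
    then have b: "(\<lambda>i. B i x) \<in> space blocks"
      using measurable_space[OF B_seq_measurable] by blast
    then have "B k x \<in> space N"
      by (auto simp: space_PiM)
    then show "(\<integral>\<^sup>+y. g (\<lambda>i. B i x) y \<partial>triple_law w \<kappa> (ES k) (\<lambda>i. B i x) k)
      = ennreal (mismatch (ES k) (w (B k x)) (\<Sum>i\<le>k. w (B i x))
          (J_prob k (\<lambda>i. B i x)) (H_prob k (\<lambda>i. B i x))) * abs_mean (B k x)"
      unfolding triple_law_eq g_def abs_mean_def
      using J_prob_bounds[OF b, of k] H_prob_bounds[OF b, of k]
      by (intro nn_integral_mismatch prob_space_kappa sets_kappa) auto
  qed
  finally show ?thesis .
qed

lemma measurable_prefix [measurable]: "(\<lambda>x. \<lambda>i\<in>{..<k}. B i x) \<in> measurable M (PiM {..<k} (\<lambda>_. N))"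
  by measurable

lemma nn_integral_indep_prefix:
  assumes F: "F \<in> borel_measurable N" and G: "G \<in> borel_measurable (PiM {..<k} (\<lambda>_. N))"
  shows "(\<integral>\<^sup>+x. F (B k x) * G (\<lambda>i\<in>{..<k}. B i x) \<partial>M)
       = (\<integral>\<^sup>+x. F (B k x) \<partial>M) * (\<integral>\<^sup>+x. G (\<lambda>i\<in>{..<k}. B i x) \<partial>M)"
proof -
  have ind: "indep_var (PiM {k} (\<lambda>_. N)) (\<lambda>x. \<lambda>i\<in>{k}. B i x) (PiM {..<k} (\<lambda>_. N)) (\<lambda>x. \<lambda>i\<in>{..<k}. B i x)"
    by (rule indep_var_restrict[OF B_indep]) auto
  have "(\<lambda>r. F (r k)) \<in> borel_measurable (PiM {k} (\<lambda>_. N))"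
    using F by measurable
  from indep_var_nn_integral_mult[OF ind this G] show ?thesis
    by simp
qed

lemma indep_var_weights:
  assumes "i \<noteq> j" and [measurable]: "f \<in> borel_measurable N" "g \<in> borel_measurable N"
  shows "indep_var borel (\<lambda>x. f (B i x) :: real) borel (\<lambda>x. g (B j x) :: real)"
proof -
  have ind: "indep_var (PiM {i} (\<lambda>_. N)) (\<lambda>x. \<lambda>l\<in>{i}. B l x) (PiM {j} (\<lambda>_. N)) (\<lambda>x. \<lambda>l\<in>{j}. B l x)"
    by (rule indep_var_restrict[OF B_indep]) (use assms in auto)
  have "(\<lambda>r. f (r i)) \<in> borel_measurable (PiM {i} (\<lambda>_. N))"
    "(\<lambda>r. g (r j)) \<in> borel_measurable (PiM {j} (\<lambda>_. N))"
    by measurable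
  from indep_var_compose[OF ind this] show ?thesis
    by (simp add: comp_def)
qed

lemma nn_integral_B_eq_B1:
  assumes "1 \<le> k" and "F \<in> borel_measurable N"
  shows "(\<integral>\<^sup>+x. F (B k x) \<partial>M) = (\<integral>\<^sup>+x. F (B 1 x) \<partial>M)"
proof -
  have "(\<integral>\<^sup>+x. F (B k x) \<partial>M) = (\<integral>\<^sup>+y. F y \<partial>distr M N (B k))"
    using assms by (simp add: nn_integral_distr)
  then show ?thesis
    using assms B_ident[OF assms(1)] by (simp add: nn_integral_distr)
qed

lemma
  fixes F :: "'b \<Rightarrow> real"
  assumes "1 \<le> k" and "F \<in> borel_measurable N"
  shows integral_B_eq_B1: "(\<integral>x. F (B k x) \<partial>M) = (\<integral>x. F (B 1 x) \<partial>M)"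
    and integrable_B_iff_B1: "integrable M (\<lambda>x. F (B k x)) \<longleftrightarrow> integrable M (\<lambda>x. F (B 1 x))"
proof -
  have "(\<integral>x. F (B k x) \<partial>M) = (\<integral>y. F y \<partial>distr M N (B k))"
    "integrable M (\<lambda>x. F (B k x)) \<longleftrightarrow> integrable (distr M N (B k)) F"
    using assms by (simp_all add: integral_distr integrable_distr_eq)
  then show "(\<integral>x. F (B k x) \<partial>M) = (\<integral>x. F (B 1 x) \<partial>M)"
    "integrable M (\<lambda>x. F (B k x)) \<longleftrightarrow> integrable M (\<lambda>x. F (B 1 x))"
    using assms B_ident[OF assms(1)] by (simp_all add: integral_distr integrable_distr_eq)
qed

abbreviation "weight_delta_law \<equiv>
  bind (distr M N (B 1)) (\<lambda>b. distr (\<kappa> b) (borel \<Otimes>\<^sub>M borel) (\<lambda>d. (w b, d)))"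

definition "kappa_moment g b = (\<integral>\<^sup>+d. ennreal \<bar>g (w b) d\<bar> \<partial>\<kappa> b)"

lemma kappa_moment_measurable [measurable]:
  assumes [measurable]: "(\<lambda>(a, d). g a d) \<in> borel_measurable (borel \<Otimes>\<^sub>M borel)"
  shows "kappa_moment g \<in> borel_measurable N"
  unfolding kappa_moment_def by (rule measurable_nn_integral_kappa) measurable

lemma nn_integral_kappa_moment_finite:
  fixes g :: "real \<Rightarrow> real \<Rightarrow> real"
  assumes g [measurable]: "(\<lambda>(a, d). g a d) \<in> borel_measurable (borel \<Otimes>\<^sub>M borel)"
    and int: "integrable weight_delta_law (\<lambda>(a, d). g a d)"
  shows "(\<integral>\<^sup>+x. kappa_moment g (B 1 x) \<partial>M) < \<infinity>"
proof -
  have K: "(\<lambda>b. distr (\<kappa> b) (borel \<Otimes>\<^sub>M borel) (\<lambda>d. (w b, d)))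
      \<in> measurable (distr M N (B 1)) (subprob_algebra (borel \<Otimes>\<^sub>M borel))"
    unfolding measurable_cong_sets[OF sets_distr refl]
    by (rule measurable_distr2[where M=borel]) (auto intro: measurable_prob_algebraD)
  have inner: "(\<integral>\<^sup>+z. ennreal \<bar>case z of (a, d) \<Rightarrow> g a d\<bar> \<partial>distr (\<kappa> b) (borel \<Otimes>\<^sub>M borel) (\<lambda>d. (w b, d)))
      = (\<integral>\<^sup>+d. ennreal \<bar>g (w b) d\<bar> \<partial>\<kappa> b)" if "b \<in> space N" for b
    using sets_kappa[OF that] by (subst nn_integral_distr) (auto simp: measurable_cong_sets[OF sets_kappa[OF that] refl])
  have "(\<integral>\<^sup>+x. kappa_moment g (B 1 x) \<partial>M) = (\<integral>\<^sup>+b. kappa_moment g b \<partial>distr M N (B 1))"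
    by (simp add: nn_integral_distr)
  also have "\<dots> = (\<integral>\<^sup>+z. ennreal \<bar>case z of (a, d) \<Rightarrow> g a d\<bar> \<partial>weight_delta_law)"
    by (subst nn_integral_bind[OF _ K]) (auto intro!: nn_integral_cong simp: inner kappa_moment_def)
  also have "\<dots> < \<infinity>"
    using int by (simp add: integrable_iff_bounded)
  finally show ?thesis .
qed

lemma weight_power_abs_mean_le:
  assumes b: "b \<in> space N" and "j \<le> 2"
  shows "ennreal (w b ^ j) * abs_mean b
    \<le> 1 + kappa_moment (\<lambda>a d. a\<^sup>2) b + kappa_moment (\<lambda>a d. d\<^sup>2) b + kappa_moment (\<lambda>a d. (a * d)\<^sup>2) b"
proof -
  interpret K: prob_space "\<kappa> b"
    by (rule prob_space_kappa[OF b])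
  have [measurable_cong]: "sets (\<kappa> b) = sets borel"
    by (rule sets_kappa[OF b])
  have "ennreal (w b ^ j) * abs_mean b = (\<integral>\<^sup>+d. ennreal (w b ^ j * \<bar>d\<bar>) \<partial>\<kappa> b)"
    unfolding abs_mean_def using w_nonneg[OF b]
    by (subst nn_integral_cmult[symmetric]) (simp_all add: ennreal_mult'')
  also have "\<dots> \<le> (\<integral>\<^sup>+d. ennreal (1 + (w b)\<^sup>2 + d\<^sup>2 + (w b * d)\<^sup>2) \<partial>\<kappa> b)"
    by (intro nn_integral_mono ennreal_leI power_mult_abs_le[OF w_nonneg[OF b] assms(2)])
  also have "\<dots> = 1 + kappa_moment (\<lambda>a d. a\<^sup>2) b + kappa_moment (\<lambda>a d. d\<^sup>2) b + kappa_moment (\<lambda>a d. (a * d)\<^sup>2) b"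
    unfolding kappa_moment_def using K.emeasure_space_1 by (simp add: nn_integral_add)
  finally show ?thesis .
qed

lemma nn_integral_weight_power_abs_mean_finite:
  assumes "j \<le> 2"
  shows "(\<integral>\<^sup>+x. ennreal (w (B 1 x) ^ j) * abs_mean (B 1 x) \<partial>M) < \<infinity>"
proof -
  have "(\<integral>\<^sup>+x. ennreal (w (B 1 x) ^ j) * abs_mean (B 1 x) \<partial>M)
      \<le> (\<integral>\<^sup>+x. 1 + kappa_moment (\<lambda>a d. a\<^sup>2) (B 1 x) + kappa_moment (\<lambda>a d. d\<^sup>2) (B 1 x)
              + kappa_moment (\<lambda>a d. (a * d)\<^sup>2) (B 1 x) \<partial>M)"
    using measurable_space[OF B_meas] by (intro nn_integral_mono weight_power_abs_mean_le assms) blast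
  also have "\<dots> = 1 + (\<integral>\<^sup>+x. kappa_moment (\<lambda>a d. a\<^sup>2) (B 1 x) \<partial>M)
      + (\<integral>\<^sup>+x. kappa_moment (\<lambda>a d. d\<^sup>2) (B 1 x) \<partial>M)
      + (\<integral>\<^sup>+x. kappa_moment (\<lambda>a d. (a * d)\<^sup>2) (B 1 x) \<partial>M)"
    by (simp add: nn_integral_add emeasure_space_1)
  also have "\<dots> < \<infinity>"
    using nn_integral_kappa_moment_finite[OF _ mom_W2] nn_integral_kappa_moment_finite[OF _ mom_D2]
      nn_integral_kappa_moment_finite[OF _ mom_WD2]
    by (simp add: ennreal_add_less_top)
  finally show ?thesis .
qed

definition "abs_moment j = enn2real (\<integral>\<^sup>+x. ennreal (w (B 1 x) ^ j) * abs_mean (B 1 x) \<partial>M)"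

lemma abs_moment_nonneg: "0 \<le> abs_moment j"
  by (simp add: abs_moment_def)

lemma nn_integral_weight_power_abs_mean:
  "j \<le> 2 \<Longrightarrow> (\<integral>\<^sup>+x. ennreal (w (B 1 x) ^ j) * abs_mean (B 1 x) \<partial>M) = ennreal (abs_moment j)"
  using nn_integral_weight_power_abs_mean_finite[of j] by (simp add: abs_moment_def less_top[symmetric])

lemma nn_integral_last_factor:
  assumes "1 \<le> k" "j \<le> 2" and G [measurable]: "G \<in> borel_measurable (PiM {..<k} (\<lambda>_. N))"
  shows "(\<integral>\<^sup>+x. ennreal c * (ennreal (w (B k x) ^ j) * abs_mean (B k x) * G (\<lambda>i\<in>{..<k}. B i x)) \<partial>M)
       = ennreal c * ennreal (abs_moment j) * (\<integral>\<^sup>+x. G (\<lambda>i\<in>{..<k}. B i x) \<partial>M)"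
proof -
  have F: "(\<lambda>b. ennreal (w b ^ j) * abs_mean b) \<in> borel_measurable N"
    by measurable
  have "(\<integral>\<^sup>+x. ennreal c * (ennreal (w (B k x) ^ j) * abs_mean (B k x) * G (\<lambda>i\<in>{..<k}. B i x)) \<partial>M)
      = ennreal c * ((\<integral>\<^sup>+x. ennreal (w (B k x) ^ j) * abs_mean (B k x) \<partial>M) * (\<integral>\<^sup>+x. G (\<lambda>i\<in>{..<k}. B i x) \<partial>M))"
    by (subst nn_integral_cmult) (auto simp: nn_integral_indep_prefix[OF F G])
  then show ?thesis
    using nn_integral_B_eq_B1[OF assms(1) F] nn_integral_weight_power_abs_mean[OF assms(2)]
    by (simp add: mult.assoc)
qed

definition "mu2 = expectation (\<lambda>x. (w (B 1 x))\<^sup>2)"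

lemma integrable_W1: "integrable M (\<lambda>x. w (B 1 x))"
  using EW_pos not_integrable_integral_eq by fastforce

lemma integrable_W1_sq: "integrable M (\<lambda>x. (w (B 1 x))\<^sup>2)"
proof (rule integrableI_bounded)
  have "(\<integral>\<^sup>+x. ennreal (norm ((w (B 1 x))\<^sup>2)) \<partial>M) = (\<integral>\<^sup>+x. \<integral>\<^sup>+d. ennreal \<bar>(w (B 1 x))\<^sup>2\<bar> \<partial>\<kappa> (B 1 x) \<partial>M)"
  proof (intro nn_integral_cong)
    fix x assume "x \<in> space M"
    then have "B 1 x \<in> space N"
      using measurable_space[OF B_meas] by blast
    then show "ennreal (norm ((w (B 1 x))\<^sup>2)) = (\<integral>\<^sup>+d. ennreal \<bar>(w (B 1 x))\<^sup>2\<bar> \<partial>\<kappa> (B 1 x))"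
      using prob_space.emeasure_space_1[OF prob_space_kappa] by simp
  qed
  also have "\<dots> < \<infinity>"
    by (rule nn_integral_kappa_moment_finite[OF _ mom_W2, unfolded kappa_moment_def]) measurable
  finally show "(\<integral>\<^sup>+x. ennreal (norm ((w (B 1 x))\<^sup>2)) \<partial>M) < \<infinity>" .
qed simp

lemma
  assumes "1 \<le> k"
  shows integrable_W: "integrable M (\<lambda>x. w (B k x))"
    and expectation_W: "expectation (\<lambda>x. w (B k x)) = mu"
    and integrable_W_sq: "integrable M (\<lambda>x. (w (B k x))\<^sup>2)"
    and expectation_W_sq: "expectation (\<lambda>x. (w (B k x))\<^sup>2) = mu2"
  using integral_B_eq_B1[OF assms, of w] integrable_B_iff_B1[OF assms, of w]
    integral_B_eq_B1[OF assms, of "\<lambda>b. (w b)\<^sup>2"] integrable_B_iff_B1[OF assms, of "\<lambda>b. (w b)\<^sup>2"]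
    integrable_W1 integrable_W1_sq
  by (simp_all add: mu_def mu2_def)

lemma expectation_centered_products:
  assumes "1 \<le> i" "1 \<le> j"
  shows "integrable M (\<lambda>x. (w (B i x) - mu) * (w (B j x) - mu))"
    and "expectation (\<lambda>x. (w (B i x) - mu) * (w (B j x) - mu)) = (if i = j then mu2 - mu\<^sup>2 else 0)"
proof -
  have int: "integrable M (\<lambda>x. w (B l x) - mu)" and mean: "expectation (\<lambda>x. w (B l x) - mu) = 0"
    if "1 \<le> l" for l
    using integrable_W[OF that] expectation_W[OF that] by (simp_all add: prob_space)
  have "integrable M (\<lambda>x. (w (B i x) - mu) * (w (B j x) - mu))
      \<and> expectation (\<lambda>x. (w (B i x) - mu) * (w (B j x) - mu)) = (if i = j then mu2 - mu\<^sup>2 else 0)"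
  proof (cases "i = j")
    case True
    have "(\<lambda>x. (w (B i x) - mu) * (w (B j x) - mu)) = (\<lambda>x. (w (B i x))\<^sup>2 - 2 * mu * w (B i x) + mu\<^sup>2)"
      using True by (simp add: power2_eq_square algebra_simps)
    then show ?thesis
      using True integrable_W[OF assms(1)] integrable_W_sq[OF assms(1)]
        expectation_W[OF assms(1)] expectation_W_sq[OF assms(1)]
      by (simp add: prob_space power2_eq_square)
  next
    case False
    have ind: "indep_var borel (\<lambda>x. w (B i x) - mu) borel (\<lambda>x. w (B j x) - mu)"
      using indep_var_weights[OF False, of "\<lambda>b. w b - mu" "\<lambda>b. w b - mu"] by simp
    show ?thesis
      using False indep_var_lebesgue_integral[OF ind int[OF assms(1)] int[OF assms(2)]]
        indep_var_integrable[OF ind int[OF assms(1)] int[OF assms(2)]]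
        mean[OF assms(1)] mean[OF assms(2)]
      by simp
  qed
  then show "integrable M (\<lambda>x. (w (B i x) - mu) * (w (B j x) - mu))"
    and "expectation (\<lambda>x. (w (B i x) - mu) * (w (B j x) - mu)) = (if i = j then mu2 - mu\<^sup>2 else 0)"
    by auto
qed

lemma mu_sq_le_mu2: "mu\<^sup>2 \<le> mu2"
  using expectation_centered_products(2)[of 1 1] integral_nonneg_AE[of "\<lambda>x. (w (B 1 x) - mu) * (w (B 1 x) - mu)" M]
  by simp

lemma mu2_pos: "0 < mu2"
  using mu_sq_le_mu2 mu_pos by (smt (verit) zero_less_power2)

text \<open>The three terms below depend on \<open>B_0, \<dots>, B_(k-1)\<close> only, so they are independent of \<open>B_k\<close>.\<close>

definition "Wsum k r = (\<Sum>i\<in>{1..<k}. w (r i))"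
definition "head_term r = w (r 0) + mu0"
definition "dev_term k r = (Wsum k r - real (k - 1) * mu)\<^sup>2"
definition "small_term k r = (if Wsum k r < ES k / 2 then 1 else 0 :: real)"

lemma Wsum_restrict [simp]: "Wsum k (\<lambda>i\<in>{..<k}. r i) = Wsum k r"
  by (simp add: Wsum_def)

lemma head_term_restrict [simp]: "1 \<le> (k :: nat) \<Longrightarrow> head_term (\<lambda>i\<in>{..<k}. r i) = head_term r"
  by (simp add: head_term_def Suc_le_eq)

lemma dev_term_restrict [simp]: "dev_term k (\<lambda>i\<in>{..<k}. r i) = dev_term k r"
  and small_term_restrict [simp]: "small_term k (\<lambda>i\<in>{..<k}. r i) = small_term k r"
  by (simp_all add: dev_term_def small_term_def)

lemma weight_component_measurable:
  "i < k \<Longrightarrow> (\<lambda>r. w (r i)) \<in> borel_measurable (PiM {..<k} (\<lambda>_. N))"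
  using measurable_compose[OF measurable_component_singleton[of i "{..<k}" "\<lambda>_. N"] w_meas] by simp

lemma Wsum_measurable [measurable]: "Wsum k \<in> borel_measurable (PiM {..<k} (\<lambda>_. N))"
  unfolding Wsum_def by (intro borel_measurable_sum weight_component_measurable) auto

lemma head_term_measurable: "1 \<le> (k :: nat) \<Longrightarrow> head_term \<in> borel_measurable (PiM {..<k} (\<lambda>_. N))"
  unfolding head_term_def by (intro borel_measurable_add weight_component_measurable) (auto simp: Suc_le_eq)

lemma dev_term_measurable: "dev_term k \<in> borel_measurable (PiM {..<k} (\<lambda>_. N))"
  and small_term_measurable: "small_term k \<in> borel_measurable (PiM {..<k} (\<lambda>_. N))"
  unfolding dev_term_def small_term_def by measurable

lemma nn_integral_head_term:
  shows "(\<integral>\<^sup>+x. ennreal (head_term (\<lambda>i. B i x)) \<partial>M) = ennreal (2 * mu0)"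
proof -
  have "(\<integral>\<^sup>+x. ennreal (head_term (\<lambda>i. B i x)) \<partial>M) = ennreal (\<integral>x. w (B 0 x) + mu0 \<partial>M)"
    using EW0_fin W0_pos mu0_pos
    by (subst nn_integral_eq_integral[symmetric])
      (auto intro!: nn_integral_cong AE_I2 add_pos_pos less_imp_le simp: head_term_def)
  also have "(\<integral>x. w (B 0 x) + mu0 \<partial>M) = 2 * mu0"
    using EW0_fin by (simp add: mu0_def prob_space)
  finally show ?thesis .
qed

lemma nn_integral_dev_term:
  assumes "1 \<le> k"
  shows "(\<integral>\<^sup>+x. ennreal (dev_term k (\<lambda>i. B i x)) \<partial>M) = ennreal (real (k - 1) * (mu2 - mu\<^sup>2))"
proof -
  let ?I = "{1..<k}"
  define c where "c i j = (\<lambda>x. (w (B i x) - mu) * (w (B j x) - mu))" for i j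
  have dev_eq: "dev_term k (\<lambda>i. B i x) = (\<Sum>i\<in>?I. \<Sum>j\<in>?I. c i j x)" for x
  proof -
    have "Wsum k (\<lambda>i. B i x) - real (k - 1) * mu = (\<Sum>i\<in>?I. w (B i x) - mu)"
      by (simp add: Wsum_def sum_subtractf)
    then show ?thesis
      by (simp add: dev_term_def c_def power2_eq_square sum_product)
  qed
  have int: "integrable M (c i j)" and exp: "expectation (c i j) = (if i = j then mu2 - mu\<^sup>2 else 0)"
    if "i \<in> ?I" "j \<in> ?I" for i j
    using expectation_centered_products[of i j] that by (auto simp: c_def)
  have "(\<integral>\<^sup>+x. ennreal (dev_term k (\<lambda>i. B i x)) \<partial>M)
      = ennreal (expectation (\<lambda>x. \<Sum>i\<in>?I. \<Sum>j\<in>?I. c i j x))"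
  proof -
    have "0 \<le> (\<Sum>i\<in>?I. \<Sum>j\<in>?I. c i j x)" for x
      by (metis dev_eq dev_term_def zero_le_power2)
    then show ?thesis
      unfolding dev_eq using int
      by (intro nn_integral_eq_integral Bochner_Integration.integrable_sum AE_I2) auto
  qed
  also have "expectation (\<lambda>x. \<Sum>i\<in>?I. \<Sum>j\<in>?I. c i j x) = (\<Sum>i\<in>?I. expectation (\<lambda>x. \<Sum>j\<in>?I. c i j x))"
    by (rule Bochner_Integration.integral_sum) (use int in \<open>auto intro!: Bochner_Integration.integrable_sum\<close>)
  also have "\<dots> = (\<Sum>i\<in>?I. \<Sum>j\<in>?I. expectation (c i j))"
    by (intro sum.cong refl Bochner_Integration.integral_sum) (use int in auto)
  also have "\<dots> = real (k - 1) * (mu2 - mu\<^sup>2)"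
    by (simp add: exp)
  finally show ?thesis .
qed

text \<open>A Chernoff bound for the event \<open>W_1 + \<dots> + W_(k-1) < E S_k / 2\<close>: since
  \<open>exp (- y) \<le> 1 - y + y\<^sup>2 / 2\<close>, each factor \<open>exp (- theta W_i)\<close> has mean at most \<open>rho\<close>, and
  \<open>theta\<close> is chosen to make \<open>exp (theta mu / 2) * rho < 1\<close>.\<close>

definition "theta = mu / (2 * mu2)"
definition "rho = 1 - theta * mu + theta\<^sup>2 * mu2 / 2"

lemma theta_pos: "0 < theta"
  using mu_pos mu2_pos by (simp add: theta_def)

lemma rho_nonneg: "0 \<le> rho"
proof -
  have "0 \<le> (theta * mu - 1)\<^sup>2 + theta\<^sup>2 * (mu2 - mu\<^sup>2)"
    using mu_sq_le_mu2 by simp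
  then show ?thesis
    by (simp add: rho_def power2_eq_square algebra_simps)
qed

lemma nn_integral_exp_weight_le: "(\<integral>\<^sup>+x. ennreal (exp (- theta * w (B 1 x))) \<partial>M) \<le> ennreal rho"
proof -
  have "(\<integral>\<^sup>+x. ennreal (exp (- theta * w (B 1 x))) \<partial>M)
      \<le> (\<integral>\<^sup>+x. ennreal (1 - theta * w (B 1 x) + (theta * w (B 1 x))\<^sup>2 / 2) \<partial>M)"
  proof (intro nn_integral_mono ennreal_leI)
    fix x assume "x \<in> space M"
    then have "0 \<le> theta * w (B 1 x)"
      using theta_pos w_nonneg measurable_space[OF B_meas] by (simp add: less_imp_le)
    from exp_minus_le_quadratic[OF this]
    show "exp (- theta * w (B 1 x)) \<le> 1 - theta * w (B 1 x) + (theta * w (B 1 x))\<^sup>2 / 2"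
      by simp
  qed
  also have "\<dots> = ennreal (\<integral>x. 1 - theta * w (B 1 x) + (theta * w (B 1 x))\<^sup>2 / 2 \<partial>M)"
  proof (rule nn_integral_eq_integral)
    show "integrable M (\<lambda>x. 1 - theta * w (B 1 x) + (theta * w (B 1 x))\<^sup>2 / 2)"
      using integrable_W1 integrable_W1_sq by (simp add: power_mult_distrib)
    have "0 \<le> 1 - y + y\<^sup>2 / 2" for y :: real
      using sum_squares_ge_zero[of "y - 1" 1] by (simp add: power2_eq_square algebra_simps)
    then show "AE x in M. 0 \<le> 1 - theta * w (B 1 x) + (theta * w (B 1 x))\<^sup>2 / 2"
      by simp
  qed
  also have "(\<integral>x. 1 - theta * w (B 1 x) + (theta * w (B 1 x))\<^sup>2 / 2 \<partial>M) = rho"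
    using integrable_W1 integrable_W1_sq by (simp add: rho_def prob_space power_mult_distrib mu2_def mu_def)
  finally show ?thesis .
qed

lemma nn_integral_small_term_le:
  assumes "1 \<le> k"
  shows "(\<integral>\<^sup>+x. ennreal (small_term k (\<lambda>i. B i x)) \<partial>M) \<le> ennreal (exp (theta * ES k / 2) * rho ^ (k - 1))"
proof -
  let ?I = "{1..<k}"
  define X where "X i x = ennreal (exp (- theta * w (B i x)))" for i x
  have markov: "ennreal (small_term k (\<lambda>i. B i x)) \<le> ennreal (exp (theta * ES k / 2)) * (\<Prod>i\<in>?I. X i x)" for x
  proof -
    have "(\<Prod>i\<in>?I. X i x) = ennreal (exp (- theta * (\<Sum>i\<in>?I. w (B i x))))"
      unfolding X_def by (simp add: prod_ennreal exp_sum[symmetric] sum_distrib_left)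
    moreover have "small_term k (\<lambda>i. B i x) \<le> exp (theta * (ES k / 2 - (\<Sum>i\<in>?I. w (B i x))))"
      using theta_pos by (auto simp: small_term_def Wsum_def)
    ultimately show ?thesis
      by (simp add: ennreal_mult''[symmetric] exp_add[symmetric] algebra_simps)
  qed
  have "indep_vars (\<lambda>_. borel) (\<lambda>i x. (\<lambda>b. ennreal (exp (- theta * w b))) (B i x)) UNIV"
    by (rule indep_vars_compose2[OF B_indep]) measurable
  then have ind: "indep_vars (\<lambda>_. borel) X ?I"
    unfolding X_def by (rule indep_vars_subset) simp
  have "(\<integral>\<^sup>+x. (\<Prod>i\<in>?I. X i x) \<partial>M) = (\<Prod>i\<in>?I. \<integral>\<^sup>+x. X i x \<partial>M)"
    by (rule indep_vars_nn_integral[OF _ ind]) auto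
  also have "\<dots> = (\<Prod>i\<in>?I. \<integral>\<^sup>+x. ennreal (exp (- theta * w (B 1 x))) \<partial>M)"
    unfolding X_def by (intro prod.cong refl nn_integral_B_eq_B1) auto
  also have "\<dots> \<le> ennreal rho ^ (k - 1)"
    using power_mono[OF nn_integral_exp_weight_le, of "k - 1"] by simp
  finally have prod_le: "(\<integral>\<^sup>+x. (\<Prod>i\<in>?I. X i x) \<partial>M) \<le> ennreal rho ^ (k - 1)" .
  have "(\<integral>\<^sup>+x. ennreal (small_term k (\<lambda>i. B i x)) \<partial>M)
      \<le> (\<integral>\<^sup>+x. ennreal (exp (theta * ES k / 2)) * (\<Prod>i\<in>?I. X i x) \<partial>M)"
    by (intro nn_integral_mono markov)
  also have "\<dots> = ennreal (exp (theta * ES k / 2)) * (\<integral>\<^sup>+x. (\<Prod>i\<in>?I. X i x) \<partial>M)"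
    by (rule nn_integral_cmult) (simp add: X_def)
  also have "\<dots> \<le> ennreal (exp (theta * ES k / 2)) * ennreal rho ^ (k - 1)"
    by (rule mult_left_mono[OF prod_le]) simp
  finally show ?thesis
    using rho_nonneg by (simp add: ennreal_mult ennreal_power)
qed

definition "defect_bound k r =
  3 / (ES k)\<^sup>2 * (w (r k))\<^sup>2 + (2 * mu + sqrt (ES k)) / (ES k)\<^sup>2 * w (r k)
  + 2 / (ES k)\<^sup>2 * w (r k) * head_term r + 1 / (sqrt (ES k) * (ES k)\<^sup>2) * w (r k) * dev_term k r
  + small_term k r"

lemma mismatch_le_defect_bound:
  assumes k: "1 \<le> k" and x: "x \<in> space M"
  shows "mismatch (ES k) (w (B k x)) (\<Sum>i\<le>k. w (B i x)) (J_prob k (\<lambda>i. B i x)) (H_prob k (\<lambda>i. B i x))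
    \<le> defect_bound k (\<lambda>i. B i x)"
proof -
  have b: "B i x \<in> space N" for i
    using x measurable_space[OF B_meas] by blast
  have e: "ES k = real (k - 1) * mu + mu + mu0"
    using k by (simp add: ES_def of_nat_diff algebra_simps)
  have s: "(\<Sum>i\<le>k. w (B i x)) = w (B k x) + w (B 0 x) + Wsum k (\<lambda>i. B i x)"
    using sum_atMost_split_first_last[OF k] by (simp add: Wsum_def)
  let ?W = "w (B k x)"
  let ?V = "w (B 0 x)"
  let ?T = "Wsum k (\<lambda>i. B i x)"
  let ?a = "real (k - 1) * mu"
  have "0 \<le> ?T"
    unfolding Wsum_def by (intro sum_nonneg w_nonneg b)
  from mismatch_coupling_le[OF e ES_pos w_nonneg[OF b[of k]] W0_pos[OF x] this _ mu0_pos[THEN less_imp_le]]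
  have "mismatch (ES k) ?W (\<Sum>i\<le>k. w (B i x)) (J_prob k (\<lambda>i. B i x)) (H_prob k (\<lambda>i. B i x))
      \<le> (3 * ?W\<^sup>2 + 2 * mu * ?W + 2 * ?W * (?V + mu0) + ?W * ((?T - ?a)\<^sup>2 / sqrt (ES k) + sqrt (ES k)))
          / (ES k)\<^sup>2 + small_term k (\<lambda>i. B i x)"
    using mu_pos by (simp add: s J_prob_def H_prob_def small_term_def)
  also have "(3 * ?W\<^sup>2 + 2 * mu * ?W + 2 * ?W * (?V + mu0) + ?W * ((?T - ?a)\<^sup>2 / sqrt (ES k) + sqrt (ES k)))
          / (ES k)\<^sup>2
      = 3 / (ES k)\<^sup>2 * ?W\<^sup>2 + (2 * mu + sqrt (ES k)) / (ES k)\<^sup>2 * ?W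
        + 2 / (ES k)\<^sup>2 * ?W * (?V + mu0) + 1 / (sqrt (ES k) * (ES k)\<^sup>2) * ?W * (?T - ?a)\<^sup>2"
    using ES_pos[of k] by (simp add: field_simps)
  finally show ?thesis
    by (simp add: defect_bound_def head_term_def dev_term_def)
qed

definition "mean_bound k =
  3 / (ES k)\<^sup>2 * abs_moment 2 + (2 * mu + sqrt (ES k)) / (ES k)\<^sup>2 * abs_moment 1
  + 2 / (ES k)\<^sup>2 * abs_moment 1 * (2 * mu0) + 1 / (sqrt (ES k) * (ES k)\<^sup>2) * abs_moment 1 * (real (k - 1) * (mu2 - mu\<^sup>2))
  + abs_moment 0 * (exp (theta * ES k / 2) * rho ^ (k - 1))"

definition "weighted_term k j g x =
  ennreal (w (B k x) ^ j) * abs_mean (B k x) * ennreal (g (\<lambda>i\<in>{..<k}. B i x))"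

lemma nn_integral_weighted_term:
  assumes "1 \<le> k" "j \<le> 2" and [measurable]: "g \<in> borel_measurable (PiM {..<k} (\<lambda>_. N))"
  shows "(\<integral>\<^sup>+x. ennreal c * weighted_term k j g x \<partial>M)
    = ennreal c * ennreal (abs_moment j) * (\<integral>\<^sup>+x. ennreal (g (\<lambda>i\<in>{..<k}. B i x)) \<partial>M)"
  unfolding weighted_term_def using assms(1,2) by (intro nn_integral_last_factor) measurable

lemma weighted_term_measurable [measurable]:
  assumes [measurable]: "g \<in> borel_measurable (PiM {..<k} (\<lambda>_. N))"
  shows "weighted_term k j g \<in> borel_measurable M"
  unfolding weighted_term_def by measurable

lemma ennreal_defect_bound_mult:
  assumes k: "1 \<le> k" and x: "x \<in> space M"
  shows "ennreal (defect_bound k (\<lambda>i. B i x)) * abs_mean (B k x)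
    = ennreal (3 / (ES k)\<^sup>2) * weighted_term k 2 (\<lambda>_. 1) x
      + ennreal ((2 * mu + sqrt (ES k)) / (ES k)\<^sup>2) * weighted_term k 1 (\<lambda>_. 1) x
      + ennreal (2 / (ES k)\<^sup>2) * weighted_term k 1 head_term x
      + ennreal (1 / (sqrt (ES k) * (ES k)\<^sup>2)) * weighted_term k 1 (dev_term k) x
      + weighted_term k 0 (small_term k) x"
proof -
  let ?e = "ES k"
  let ?W = "w (B k x)"
  let ?m = "abs_mean (B k x)"
  have W: "0 \<le> ?W"
    using x measurable_space[OF B_meas] w_nonneg by blast
  have c: "0 \<le> 3 / ?e\<^sup>2" "0 \<le> (2 * mu + sqrt ?e) / ?e\<^sup>2" "0 \<le> 2 / ?e\<^sup>2" "0 \<le> 1 / (sqrt ?e * ?e\<^sup>2)"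
    using mu_pos ES_pos[of k] by auto
  have g: "0 \<le> head_term (\<lambda>i. B i x)" "0 \<le> dev_term k (\<lambda>i. B i x)" "0 \<le> small_term k (\<lambda>i. B i x)"
    using W0_pos[OF x] mu0_pos by (simp_all add: head_term_def dev_term_def small_term_def)
  have "ennreal (defect_bound k (\<lambda>i. B i x)) * ?m
      = ennreal (3 / ?e\<^sup>2 * ?W\<^sup>2) * ?m + ennreal ((2 * mu + sqrt ?e) / ?e\<^sup>2 * ?W) * ?m
        + ennreal (2 / ?e\<^sup>2 * ?W * head_term (\<lambda>i. B i x)) * ?m
        + ennreal (1 / (sqrt ?e * ?e\<^sup>2) * ?W * dev_term k (\<lambda>i. B i x)) * ?m
        + ennreal (small_term k (\<lambda>i. B i x)) * ?m"
    unfolding defect_bound_def using c g W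
    by (simp only: ennreal_plus add_nonneg_nonneg mult_nonneg_nonneg zero_le_power2 distrib_right)
  also have "\<dots> = ennreal (3 / ?e\<^sup>2) * weighted_term k 2 (\<lambda>_. 1) x
      + ennreal ((2 * mu + sqrt ?e) / ?e\<^sup>2) * weighted_term k 1 (\<lambda>_. 1) x
      + ennreal (2 / ?e\<^sup>2) * weighted_term k 1 head_term x
      + ennreal (1 / (sqrt ?e * ?e\<^sup>2)) * weighted_term k 1 (dev_term k) x
      + weighted_term k 0 (small_term k) x"
    using c g W k
    by (simp only: weighted_term_def ennreal_mult mult_nonneg_nonneg zero_le_power2 head_term_restrict
        dev_term_restrict small_term_restrict power_one_right power_0 ennreal_1) (simp add: mult_ac)
  finally show ?thesis .
qed

lemma nn_integral_Y_minus_X_le: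
  assumes k: "1 \<le> k" and kn: "k < n"
  shows "(\<integral>\<^sup>+x. ennreal \<bar>Y_minus_X n k x\<bar> \<partial>M) \<le> ennreal (mean_bound k)"
proof -
  let ?e = "ES k"
  let ?T = "weighted_term k"
  have "(\<integral>\<^sup>+x. ennreal \<bar>Y_minus_X n k x\<bar> \<partial>M)
      \<le> (\<integral>\<^sup>+x. ennreal (defect_bound k (\<lambda>i. B i x)) * abs_mean (B k x) \<partial>M)"
    unfolding nn_integral_Y_minus_X[OF kn]
    by (intro nn_integral_mono mult_right_mono ennreal_leI mismatch_le_defect_bound k) auto
  also have "\<dots> = (\<integral>\<^sup>+x. ennreal (3 / ?e\<^sup>2) * ?T 2 (\<lambda>_. 1) x \<partial>M)
        + (\<integral>\<^sup>+x. ennreal ((2 * mu + sqrt ?e) / ?e\<^sup>2) * ?T 1 (\<lambda>_. 1) x \<partial>M)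
        + (\<integral>\<^sup>+x. ennreal (2 / ?e\<^sup>2) * ?T 1 head_term x \<partial>M)
        + (\<integral>\<^sup>+x. ennreal (1 / (sqrt ?e * ?e\<^sup>2)) * ?T 1 (dev_term k) x \<partial>M)
        + (\<integral>\<^sup>+x. ennreal 1 * ?T 0 (small_term k) x \<partial>M)"
    using head_term_measurable[OF k] dev_term_measurable small_term_measurable
    by (simp add: nn_integral_cong[OF ennreal_defect_bound_mult[OF k]] nn_integral_add)
  also have "\<dots> = ennreal (3 / ?e\<^sup>2) * ennreal (abs_moment 2)
        + ennreal ((2 * mu + sqrt ?e) / ?e\<^sup>2) * ennreal (abs_moment 1)
        + ennreal (2 / ?e\<^sup>2) * ennreal (abs_moment 1) * ennreal (2 * mu0)
        + ennreal (1 / (sqrt ?e * ?e\<^sup>2)) * ennreal (abs_moment 1) * ennreal (real (k - 1) * (mu2 - mu\<^sup>2))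
        + ennreal 1 * ennreal (abs_moment 0) * (\<integral>\<^sup>+x. ennreal (small_term k (\<lambda>i. B i x)) \<partial>M)"
    using nn_integral_weighted_term[OF k, of 2 "\<lambda>_. 1"] nn_integral_weighted_term[OF k, of 1 "\<lambda>_. 1"]
      nn_integral_weighted_term[OF k _ head_term_measurable[OF k]]
      nn_integral_weighted_term[OF k _ dev_term_measurable]
      nn_integral_weighted_term[OF k _ small_term_measurable, of 0 1] k
    by (simp add: emeasure_space_1 nn_integral_head_term nn_integral_dev_term[OF k])
  also have "\<dots> \<le> ennreal (3 / ?e\<^sup>2) * ennreal (abs_moment 2) + ennreal ((2 * mu + sqrt ?e) / ?e\<^sup>2) * ennreal (abs_moment 1)
        + ennreal (2 / ?e\<^sup>2) * ennreal (abs_moment 1) * ennreal (2 * mu0)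
        + ennreal (1 / (sqrt ?e * ?e\<^sup>2)) * ennreal (abs_moment 1) * ennreal (real (k - 1) * (mu2 - mu\<^sup>2))
        + ennreal 1 * ennreal (abs_moment 0) * ennreal (exp (theta * ?e / 2) * rho ^ (k - 1))"
    by (intro add_left_mono mult_left_mono nn_integral_small_term_le k) simp
  also have "\<dots> = ennreal (mean_bound k)"
  proof -
    have "0 \<le> 3 / ?e\<^sup>2" "0 \<le> (2 * mu + sqrt ?e) / ?e\<^sup>2" "0 \<le> 2 / ?e\<^sup>2" "0 \<le> 1 / (sqrt ?e * ?e\<^sup>2)"
      "0 \<le> 2 * mu0" "0 \<le> real (k - 1) * (mu2 - mu\<^sup>2)" "0 \<le> exp (theta * ?e / 2) * rho ^ (k - 1)"
      using mu_pos mu0_pos ES_pos[of k] mu_sq_le_mu2 rho_nonneg by auto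
    then show ?thesis
      unfolding mean_bound_def using abs_moment_nonneg
      by (simp only: ennreal_plus ennreal_mult add_nonneg_nonneg mult_nonneg_nonneg ennreal_1 mult_1_left)
  qed
  finally show ?thesis .
qed

subsection \<open>Summability of the bounds\<close>

definition "rate = exp (theta * mu / 2) * rho"
definition "K_quad = (3 * abs_moment 2 + 2 * mu * abs_moment 1 + 4 * mu0 * abs_moment 1) / mu\<^sup>2"
definition "K_dev = (abs_moment 1 + abs_moment 1 * mu2 / mu) * mu powr (-3/2)"
definition "K_exp = abs_moment 0 * exp (theta * mu0 / 2) * exp (theta * mu / 2)"
definition "summable_bound k = K_quad * inverse (real k ^ 2) + K_dev * real k powr (-3/2) + K_exp * rate ^ (k - 1)"

text \<open>With \<open>x = mu\<^sup>2 / mu2\<close> one has \<open>rate = exp (x / 4) (1 - 3 x / 8) \<le> exp (- x / 8)\<close>.\<close>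

lemma rate_bounds: "0 \<le> rate" "rate < 1"
proof -
  show "0 \<le> rate"
    unfolding rate_def using rho_nonneg by simp
  define x where "x = mu\<^sup>2 / mu2"
  have x: "0 < x"
    using mu_pos mu2_pos by (simp add: x_def)
  have "rate = exp (x / 4) * (1 - 3 / 8 * x)"
    using mu2_pos by (simp add: rate_def rho_def theta_def x_def field_simps power2_eq_square)
  also have "\<dots> \<le> exp (x / 4) * exp (- (3 / 8 * x))"
    using exp_ge_add_one_self[of "- (3/8 * x)"] by (intro mult_left_mono) auto
  also have "\<dots> = exp (- (x / 8))"
    by (simp add: exp_add[symmetric])
  also have "\<dots> < 1"
    using x by simp
  finally show "rate < 1" .
qed

lemma summable_bound_nonneg: "0 \<le> summable_bound k"
  using abs_moment_nonneg mu_pos mu0_pos mu2_pos rate_bounds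
  by (auto simp: summable_bound_def K_quad_def K_dev_def K_exp_def
      intro!: add_nonneg_nonneg mult_nonneg_nonneg divide_nonneg_nonneg)

lemma summable_summable_bound: "summable summable_bound"
proof -
  have "summable (\<lambda>k. K_quad * inverse (real k ^ 2))"
    using inverse_power_summable[of 2, where 'a=real] by (intro summable_mult) auto
  moreover have "summable (\<lambda>k. K_dev * real k powr (-3/2))"
    by (intro summable_mult) (simp add: summable_real_powr_iff)
  moreover have "summable (\<lambda>k. K_exp * rate ^ (k - 1))"
  proof -
    have "summable (\<lambda>k. K_exp * rate ^ (Suc k - 1))"
      using rate_bounds by (simp add: summable_mult summable_geometric)
    then show ?thesis
      by (subst summable_Suc_iff[symmetric])
  qed
  ultimately show ?thesis
    unfolding summable_bound_def by (intro summable_add)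
qed

lemma ES_ge: "real k * mu \<le> ES k"
  using mu0_pos by (simp add: ES_def)

lemma mean_bound_quadratic_part:
  assumes "1 \<le> k"
  shows "3 / (ES k)\<^sup>2 * abs_moment 2 + 2 * mu / (ES k)\<^sup>2 * abs_moment 1 + 2 / (ES k)\<^sup>2 * abs_moment 1 * (2 * mu0)
    \<le> K_quad * inverse (real k ^ 2)"
proof -
  have kmu: "0 < real k * mu"
    using assms mu_pos by simp
  have "3 / (ES k)\<^sup>2 * abs_moment 2 + 2 * mu / (ES k)\<^sup>2 * abs_moment 1 + 2 / (ES k)\<^sup>2 * abs_moment 1 * (2 * mu0)
      = (3 * abs_moment 2 + 2 * mu * abs_moment 1 + 4 * mu0 * abs_moment 1) / (ES k)\<^sup>2"
    using ES_pos[of k] by (simp add: field_simps)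
  also have "\<dots> \<le> (3 * abs_moment 2 + 2 * mu * abs_moment 1 + 4 * mu0 * abs_moment 1) / (real k * mu)\<^sup>2"
    using assms abs_moment_nonneg mu_pos mu0_pos kmu ES_ge[of k] ES_pos[of k]
    by (intro divide_left_mono power_mono mult_pos_pos zero_less_power add_nonneg_nonneg mult_nonneg_nonneg) auto
  also have "\<dots> = K_quad * inverse (real k ^ 2)"
    using mu_pos by (simp add: K_quad_def power_mult_distrib field_simps)
  finally show ?thesis .
qed

lemma mean_bound_deviation_part:
  assumes "1 \<le> k"
  shows "sqrt (ES k) / (ES k)\<^sup>2 * abs_moment 1 + 1 / (sqrt (ES k) * (ES k)\<^sup>2) * abs_moment 1 * (real (k - 1) * (mu2 - mu\<^sup>2))
    \<le> K_dev * real k powr (-3/2)"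
proof -
  let ?e = "ES k"
  have e: "0 < ?e"
    by (rule ES_pos)
  have kmu: "0 < real k * mu"
    using assms mu_pos by simp
  have "real (k - 1) * (mu2 - mu\<^sup>2) \<le> real k * mu2"
    using mu2_pos mu_sq_le_mu2 by (intro mult_mono) auto
  also have "\<dots> \<le> ?e / mu * mu2"
    using ES_ge[of k] mu_pos mu2_pos by (intro mult_right_mono) (auto simp: field_simps)
  finally have "1 / (sqrt ?e * ?e\<^sup>2) * abs_moment 1 * (real (k - 1) * (mu2 - mu\<^sup>2)) \<le> 1 / (sqrt ?e * ?e\<^sup>2) * abs_moment 1 * (?e / mu * mu2)"
    using abs_moment_nonneg e by (intro mult_left_mono) auto
  also have "\<dots> = abs_moment 1 * mu2 / mu * (1 / (?e * sqrt ?e))"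
    using e mu_pos by (simp add: field_simps power2_eq_square)
  finally have dev: "1 / (sqrt ?e * ?e\<^sup>2) * abs_moment 1 * (real (k - 1) * (mu2 - mu\<^sup>2)) \<le> abs_moment 1 * mu2 / mu * (1 / (?e * sqrt ?e))" .
  have "sqrt ?e / ?e\<^sup>2 = sqrt ?e / (sqrt ?e * sqrt ?e * ?e)"
    using e by (simp add: power2_eq_square)
  also have "\<dots> = 1 / (?e * sqrt ?e)"
    using e by (simp add: field_simps)
  finally have "sqrt ?e / ?e\<^sup>2 * abs_moment 1 + 1 / (sqrt ?e * ?e\<^sup>2) * abs_moment 1 * (real (k - 1) * (mu2 - mu\<^sup>2))
      \<le> abs_moment 1 * (1 / (?e * sqrt ?e)) + abs_moment 1 * mu2 / mu * (1 / (?e * sqrt ?e))"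
    using dev by simp
  also have "\<dots> = (abs_moment 1 + abs_moment 1 * mu2 / mu) * (1 / (?e * sqrt ?e))"
    by (rule distrib_right[symmetric])
  also have "1 / (?e * sqrt ?e) = ?e powr (-3/2)"
    by (rule one_div_mult_sqrt_eq_powr[OF e])
  also have "(abs_moment 1 + abs_moment 1 * mu2 / mu) * ?e powr (-3/2) \<le> (abs_moment 1 + abs_moment 1 * mu2 / mu) * (real k * mu) powr (-3/2)"
    using abs_moment_nonneg mu_pos mu2_pos
    by (intro mult_left_mono powr_mono2'[OF _ kmu ES_ge]) (auto intro: add_nonneg_nonneg)
  also have "\<dots> = K_dev * real k powr (-3/2)"
    using mu_pos by (simp add: K_dev_def powr_mult)
  finally show ?thesis .
qed

lemma mean_bound_exponential_part:
  assumes "1 \<le> k"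
  shows "abs_moment 0 * (exp (theta * ES k / 2) * rho ^ (k - 1)) = K_exp * rate ^ (k - 1)"
proof -
  have "theta * ES k / 2 = theta * mu0 / 2 + theta * mu / 2 + real (k - 1) * (theta * mu / 2)"
    using assms by (simp add: ES_def of_nat_diff field_simps)
  then have "exp (theta * ES k / 2) = exp (theta * mu0 / 2) * exp (theta * mu / 2) * exp (theta * mu / 2) ^ (k - 1)"
    by (simp only: exp_add exp_of_nat_mult)
  then show ?thesis
    by (simp add: K_exp_def rate_def power_mult_distrib mult_ac)
qed

lemma mean_bound_le_summable_bound:
  assumes "1 \<le> k"
  shows "mean_bound k \<le> summable_bound k"
proof -
  have "mean_bound k
      = (3 / (ES k)\<^sup>2 * abs_moment 2 + 2 * mu / (ES k)\<^sup>2 * abs_moment 1 + 2 / (ES k)\<^sup>2 * abs_moment 1 * (2 * mu0))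
      + (sqrt (ES k) / (ES k)\<^sup>2 * abs_moment 1 + 1 / (sqrt (ES k) * (ES k)\<^sup>2) * abs_moment 1 * (real (k - 1) * (mu2 - mu\<^sup>2)))
      + abs_moment 0 * (exp (theta * ES k / 2) * rho ^ (k - 1))"
    unfolding mean_bound_def by (simp add: add_divide_distrib distrib_right)
  then show ?thesis
    using mean_bound_quadratic_part[OF assms] mean_bound_deviation_part[OF assms]
      mean_bound_exponential_part[OF assms]
    by (simp add: summable_bound_def)
qed

subsection \<open>Convergence in probability\<close>

lemma nn_integral_sum_abs_Y_minus_X_le:
  "(\<integral>\<^sup>+x. (\<Sum>k\<in>{1..<n}. ennreal \<bar>Y_minus_X n k x\<bar>) \<partial>M) \<le> ennreal (suminf summable_bound)"
proof -
  have "(\<integral>\<^sup>+x. (\<Sum>k\<in>{1..<n}. ennreal \<bar>Y_minus_X n k x\<bar>) \<partial>M)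
      = (\<Sum>k\<in>{1..<n}. \<integral>\<^sup>+x. ennreal \<bar>Y_minus_X n k x\<bar> \<partial>M)"
    by (intro nn_integral_sum) auto
  also have "\<dots> \<le> (\<Sum>k\<in>{1..<n}. ennreal (summable_bound k))"
    by (intro sum_mono order.trans[OF nn_integral_Y_minus_X_le] ennreal_leI mean_bound_le_summable_bound)
      auto
  also have "\<dots> \<le> ennreal (suminf summable_bound)"
    using summable_bound_nonneg by (simp add: sum_le_suminf summable_summable_bound ennreal_leI)
  finally show ?thesis .
qed

lemma prob_Y_minus_X_sum_le:
  assumes n: "2 \<le> n" and eps: "0 < \<epsilon>"
  shows "measure M {x \<in> space M. \<bar>(\<Sum>k\<in>{1..<n}. Y_minus_X n k x) / sqrt (ln (real n))\<bar> > \<epsilon>}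
    \<le> suminf summable_bound / (\<epsilon> * sqrt (ln (real n)))"
proof -
  define L where "L = sqrt (ln (real n))"
  define c where "c = 1 / (\<epsilon> * L)"
  define u where "u x = (\<Sum>k\<in>{1..<n}. ennreal \<bar>Y_minus_X n k x\<bar>)" for x
  have L: "0 < L"
    unfolding L_def using n by simp
  have c: "0 < c"
    using L eps by (simp add: c_def)
  have u_meas [measurable]: "u \<in> borel_measurable M"
    unfolding u_def by measurable
  have sub: "{x \<in> space M. \<bar>(\<Sum>k\<in>{1..<n}. Y_minus_X n k x) / L\<bar> > \<epsilon>} \<subseteq> {x \<in> space M. 1 \<le> ennreal c * u x}"
  proof safe
    fix x assume "x \<in> space M" and gt: "\<bar>(\<Sum>k\<in>{1..<n}. Y_minus_X n k x) / L\<bar> > \<epsilon>"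
    have "\<epsilon> * L < \<bar>\<Sum>k\<in>{1..<n}. Y_minus_X n k x\<bar>"
      using gt L by (simp add: abs_divide field_simps)
    also have "\<dots> \<le> (\<Sum>k\<in>{1..<n}. \<bar>Y_minus_X n k x\<bar>)"
      by (rule sum_abs)
    finally have "1 \<le> c * (\<Sum>k\<in>{1..<n}. \<bar>Y_minus_X n k x\<bar>)"
      using L eps by (simp add: c_def field_simps)
    then show "1 \<le> ennreal c * u x"
      unfolding u_def using c by (simp add: ennreal_mult[symmetric] ennreal_leI)
  qed
  have u_le: "(\<integral>\<^sup>+x. u x \<partial>M) \<le> ennreal (suminf summable_bound)"
    unfolding u_def by (rule nn_integral_sum_abs_Y_minus_X_le)
  have "emeasure M {x \<in> space M. \<bar>(\<Sum>k\<in>{1..<n}. Y_minus_X n k x) / L\<bar> > \<epsilon>}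
      \<le> emeasure M {x \<in> space M. 1 \<le> ennreal c * u x}"
    by (rule emeasure_mono[OF sub]) measurable
  also have "\<dots> \<le> ennreal c * (\<integral>\<^sup>+x. u x * indicator (space M) x \<partial>M)"
    by (rule nn_integral_Markov_inequality) auto
  also have "(\<integral>\<^sup>+x. u x * indicator (space M) x \<partial>M) = (\<integral>\<^sup>+x. u x \<partial>M)"
    by (intro nn_integral_cong) simp
  also have "ennreal c * \<dots> \<le> ennreal (c * suminf summable_bound)"
    using u_le c by (subst ennreal_mult') (auto intro: mult_left_mono)
  finally show ?thesis
    using c summable_bound_nonneg suminf_nonneg[OF summable_summable_bound]
    by (simp add: emeasure_eq_measure L_def c_def)
qed

theorem Y_minus_X_sum_tendsto_zero:
  "\<forall>\<epsilon>>0. (\<lambda>n. measure M {x \<in> space M.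
      \<bar>(\<Sum>k\<in>{1..<n}. Y_minus_X n k x) / sqrt (ln (real n))\<bar> > \<epsilon>}) \<longlonglongrightarrow> 0"
proof (intro allI impI)
  fix \<epsilon> :: real
  assume eps: "0 < \<epsilon>"
  have "filterlim (\<lambda>n. sqrt (ln (real n))) at_top sequentially"
    by (rule filterlim_compose[OF sqrt_at_top filterlim_compose[OF ln_at_top filterlim_real_sequentially]])
  then have lim: "(\<lambda>n. suminf summable_bound / \<epsilon> / sqrt (ln (real n))) \<longlonglongrightarrow> 0"
    by (intro tendsto_divide_0[OF tendsto_const] filterlim_at_top_imp_at_infinity)
  show "(\<lambda>n. measure M {x \<in> space M.
      \<bar>(\<Sum>k\<in>{1..<n}. Y_minus_X n k x) / sqrt (ln (real n))\<bar> > \<epsilon>}) \<longlonglongrightarrow> 0"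
  proof (rule tendsto_sandwich[OF _ _ tendsto_const lim])
    show "\<forall>\<^sub>F n in sequentially. measure M {x \<in> space M.
        \<bar>(\<Sum>k\<in>{1..<n}. Y_minus_X n k x) / sqrt (ln (real n))\<bar> > \<epsilon>}
      \<le> suminf summable_bound / \<epsilon> / sqrt (ln (real n))"
      using eventually_ge_at_top[of 2]
      by eventually_elim (use prob_Y_minus_X_sum_le eps in \<open>simp add: divide_divide_eq_left\<close>)
  qed simp
qed

end

theorem lemma3p3:
  fixes M :: "'a measure" and N :: "'b measure"
    and B :: "nat \<Rightarrow> 'a \<Rightarrow> 'b"
    and w :: "'b \<Rightarrow> real"
    and \<kappa> :: "'b \<Rightarrow> real measure"
    and J D H :: "nat \<Rightarrow> nat \<Rightarrow> 'a \<Rightarrow> real"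
  assumes P: "prob_space M"
    and B_meas: "\<And>k. B k \<in> measurable M N"
    and B_indep: "prob_space.indep_vars M (\<lambda>_. N) B UNIV"
    and B_ident: "\<And>k. k \<ge> 1 \<Longrightarrow> distr M N (B k) = distr M N (B 1)"
    and w_meas: "w \<in> borel_measurable N"
    and w_nonneg: "\<And>b. b \<in> space N \<Longrightarrow> w b \<ge> 0"
    and W0_pos: "\<And>x. x \<in> space M \<Longrightarrow> w (B 0 x) > 0"
    and kappa_meas: "\<kappa> \<in> measurable N (prob_algebra borel)"
    and kappa_nonneg: "\<And>b. b \<in> space N \<Longrightarrow> AE d in \<kappa> b. d \<ge> 0"
    and EW_pos: "prob_space.expectation M (\<lambda>x. w (B 1 x)) > 0"
    and EW0_fin: "integrable M (\<lambda>x. w (B 0 x))"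
    and mom1: "integrable (bind (distr M N (B 1)) (\<lambda>b. distr (\<kappa> b) (borel \<Otimes>\<^sub>M borel) (\<lambda>d. (w b, d))))
                  (\<lambda>(a, d). a\<^sup>2)"
    and mom2: "integrable (bind (distr M N (B 1)) (\<lambda>b. distr (\<kappa> b) (borel \<Otimes>\<^sub>M borel) (\<lambda>d. (w b, d))))
                  (\<lambda>(a, d). (a * d)\<^sup>2)"
    and mom3: "integrable (bind (distr M N (B 1)) (\<lambda>b. distr (\<kappa> b) (borel \<Otimes>\<^sub>M borel) (\<lambda>d. (w b, d))))
                  (\<lambda>(a, d). a * d\<^sup>2)"
    and mom4: "integrable (bind (distr M N (B 1)) (\<lambda>b. distr (\<kappa> b) (borel \<Otimes>\<^sub>M borel) (\<lambda>d. (w b, d))))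
                  (\<lambda>(a, d). d\<^sup>2)"
    and J_meas: "\<And>n k. J n k \<in> borel_measurable M"
    and D_meas: "\<And>n k. D n k \<in> borel_measurable M"
    and H_meas: "\<And>n k. H n k \<in> borel_measurable M"
    and joint: "\<And>n. distr M
        ((\<Pi>\<^sub>M i\<in>UNIV. N) \<Otimes>\<^sub>M (\<Pi>\<^sub>M k\<in>{0..<n}. borel \<Otimes>\<^sub>M (borel \<Otimes>\<^sub>M borel)))
        (\<lambda>x. ((\<lambda>i. B i x), (\<lambda>k\<in>{0..<n}. (J n k x, D n k x, H n k x))))
      = bind (distr M (\<Pi>\<^sub>M i\<in>UNIV. N) (\<lambda>x i. B i x))
          (\<lambda>b. distr (\<Pi>\<^sub>M k\<in>{0..<n}. triple_law w \<kappa>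
                         (real k * prob_space.expectation M (\<lambda>x. w (B 1 x))
                            + prob_space.expectation M (\<lambda>x. w (B 0 x))) b k)
                  ((\<Pi>\<^sub>M i\<in>UNIV. N) \<Otimes>\<^sub>M (\<Pi>\<^sub>M k\<in>{0..<n}. borel \<Otimes>\<^sub>M (borel \<Otimes>\<^sub>M borel)))
                  (\<lambda>t. (b, t)))"
  shows "\<forall>\<epsilon>>0. (\<lambda>n. measure M {x \<in> space M.
            \<bar>(\<Sum>k\<in>{1..<n}.
               J n k x * D n k x
               - Ifun (real k * prob_space.expectation M (\<lambda>x. w (B 1 x))
                         + prob_space.expectation M (\<lambda>x. w (B 0 x)))
                      (w (B k x)) (\<Sum>i\<le>k. w (B i x)) (J n k x) (H n k x) * D n k x)
             / sqrt (ln (real n))\<bar> > \<epsilon>}) \<longlonglongrightarrow> 0"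
proof -
  interpret block_model M N B w \<kappa> J D H
  proof (rule block_model.intro[OF P], unfold_locales)
  qed (fact B_meas B_indep B_ident w_meas w_nonneg W0_pos kappa_meas EW_pos EW0_fin mom1 mom2 mom4
      J_meas D_meas H_meas joint)+
  from Y_minus_X_sum_tendsto_zero show ?thesis
    unfolding Y_minus_X_def ES_def mu_def mu0_def .
qed

end
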